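(* Let $\mu\in\mathbb{R}$, $\sigma>0$, and let $0<\alpha<\beta<1$, $0\le h_1\le h_2<1$. Put $k_1=\frac{h_2-h_1}{\beta-\alpha}$, $k_2=\frac{h_1}{1-\beta}$, $k_3=\frac{1-h_2}{\alpha}$. Then: (i) If ($k_2\ge k_1$ and $h_2\ge 1-\alpha$) or ($\max\{k_2,k_3\}<k_1$ and $k_2\ge 1$), then $\inf_{X\in V(\mu,\sigma)}\rho_{\mathcal{K}^{h_1,h_2}_{\beta,\alpha}}[X]=\mu$. (ii) If $k_2\ge k_1$ and $h_2<1-\alpha$, then $\inf_{X\in V(\mu,\sigma)}\rho_{\mathcal{K}^{h_1,h_2}_{\beta,\alpha}}[X]=\mu+\sigma\frac{h_2-1+\alpha}{\sqrt{\alpha(1-\alpha)}}$. (iii) If $k_3>k_1>k_2$, then $\inf_{X\in V(\mu,\sigma)}\rho_{\mathcal{K}^{h_1,h_2}_{\beta,\alpha}}[X]=\mu-\sigma\sqrt{\xi}$, where $$\xi=\frac{(1-h_2-\alpha)^2}{\alpha}+\frac{(h_2-h_1-\beta+\alpha)^2}{\beta-\alpha}+\frac{(h_1-1+\beta)^2}{1-\beta}.$$ (iv) If $k_3=k_1>k_2$, or if $\max\{k_2,k_3\}<k_1$ and $k_2<1$, then $\inf_{X\in V(\mu,\sigma)}\rho_{\mathcal{K}^{h_1,h_2}_{\beta,\alpha}}[X]=\mu+\sigma\frac{h_1-1+\beta}{\sqrt{\beta(1-\beta)}}$.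
   Context: All random variables are square-integrable on a common probability space. For a distortion function $h$ (nondecreasing on $[0,1]$ with $h(0)=0$, $h(1)=1$) the distortion risk measure of $X$ is the Choquet integral $\rho_h[X]=\int_0^\infty h(\bar F_X(x))\,dx+\int_{-\infty}^0\big(h(\bar F_X(x))-1\big)\,dx$, where $\bar F_X(x)=\mathbb{P}(X>x)$. For $0<\alpha<\beta<1$ and $0\le h_1\le h_2<1$, the GlueVaR distortion function is $\mathcal{K}^{h_1,h_2}_{\beta,\alpha}(p)=\frac{h_1p}{1-\beta}$ for $p\in[0,1-\beta)$, $\mathcal{K}^{h_1,h_2}_{\beta,\alpha}(p)=h_1+\frac{(h_2-h_1)(p-(1-\beta))}{\beta-\alpha}$ for $p\in[1-\beta,1-\alpha)$, and $\mathcal{K}^{h_1,h_2}_{\beta,\alpha}(p)=1$ for $p\in[1-\alpha,1]$. $V(\mu,\sigma)$ denotes the set of random variables $X$ with $\mathbb{E}X=\mu$ and $\mathrm{Var}(X)=\sigma^2$. *)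

theory Defs
  imports "HOL-Probability.Probability"
begin

definition distortion_rm :: "'a measure \<Rightarrow> (real \<Rightarrow> real) \<Rightarrow> ('a \<Rightarrow> real) \<Rightarrow> real" where
  "distortion_rm M h X =
     (LINT x:{0..}|lborel. h (measure M {\<omega> \<in> space M. X \<omega> > x}))
   + (LINT x:{..<0}|lborel. h (measure M {\<omega> \<in> space M. X \<omega> > x}) - 1)"

definition gluevar :: "real \<Rightarrow> real \<Rightarrow> real \<Rightarrow> real \<Rightarrow> real \<Rightarrow> real" where
  "gluevar h1 h2 \<beta> \<alpha> p =
     (if p < 1 - \<beta> then h1 * p / (1 - \<beta>)
      else if p < 1 - \<alpha> then h1 + (h2 - h1) * (p - (1 - \<beta>)) / (\<beta> - \<alpha>)
      else 1)"

definition Vset :: "'a measure \<Rightarrow> real \<Rightarrow> real \<Rightarrow> ('a \<Rightarrow> real) set" where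
  "Vset M \<mu> \<sigma> = {X. X \<in> borel_measurable M \<and> integrable M (\<lambda>\<omega>. (X \<omega>)\<^sup>2)
      \<and> (\<integral>\<omega>. X \<omega> \<partial>M) = \<mu> \<and> (\<integral>\<omega>. (X \<omega> - \<mu>)\<^sup>2 \<partial>M) = \<sigma>\<^sup>2}"

definition atomless :: "'a measure \<Rightarrow> bool" where
  "atomless M \<longleftrightarrow> (\<forall>A\<in>sets M. measure M A > 0 \<longrightarrow>
      (\<exists>B\<in>sets M. B \<subseteq> A \<and> 0 < measure M B \<and> measure M B < measure M A))"

end

theory Submission
  imports Defs
begin

text \<open>Write \<open>\<rho>\<^sub>g[X] = E X + \<integral> (g(S(x)) - S(x)) dx\<close> with \<open>S\<close> the survival function of \<open>X\<close>. Affine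
  minorants of \<open>g(p) - p\<close>, used on the regions \<open>x \<ge> t\<^sub>1\<close>, \<open>t\<^sub>2 \<le> x < t\<^sub>1\<close> and \<open>x < t\<^sub>2\<close>, bound
  \<open>\<rho>\<^sub>g[X]\<close> below by \<open>E X + E \<Phi>(X)\<close> with \<open>\<Phi>\<close> piecewise linear. Completing the square gives
  \<open>\<Phi>(y) \<ge> -c V/2 - (y - \<mu>)\<^sup>2/(2c)\<close>, and optimising \<open>c\<close> yields \<open>\<mu> - \<sigma> \<parallel>\<psi>'\<parallel>\<^sub>2\<close> for the convex
  piecewise linear minorant \<open>\<psi>\<close> of \<open>g(p) - p\<close>. For GlueVaR this minorant has at most three
  pieces, with kinks at \<open>1 - \<beta>\<close> and \<open>1 - \<alpha>\<close>, and three-point distributions, which exist with any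
  prescribed masses because the space is atomless, attain the bound or, owing to the jump of the
  distortion at \<open>1 - \<alpha>\<close>, approach it.\<close>

section \<open>Atomless probability spaces\<close>

lemma (in prob_space) atomless_obtain_small:
  assumes "atomless M" and A: "A \<in> sets M" "measure M A > 0" and "\<delta> > 0"
  obtains B where "B \<in> sets M" "B \<subseteq> A" "0 < measure M B" "measure M B \<le> \<delta>"
proof -
  have halving: "\<exists>B\<in>sets M. B \<subseteq> A \<and> 0 < measure M B \<and> measure M B \<le> measure M A * (1/2)^n" for n
  proof (induction n)
    case 0
    then show ?case using A by auto
  next
    case (Suc n)
    then obtain B where B: "B \<in> sets M" "B \<subseteq> A" "0 < measure M B" "measure M B \<le> measure M A * (1/2)^n"
      by blast
    with \<open>atomless M\<close> obtain C where C: "C \<in> sets M" "C \<subseteq> B" "0 < measure M C" "measure M C < measure M B"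
      unfolding atomless_def by blast
    have "measure M (B - C) = measure M B - measure M C"
      using B C by (simp add: finite_measure_Diff)
    then show ?case
    proof (cases "measure M C \<le> measure M B / 2")
      case True
      then show ?thesis using B C by (intro bexI[of _ C]) auto
    next
      case False
      then show ?thesis using B C \<open>measure M (B - C) = _\<close> by (intro bexI[of _ "B - C"]) auto
    qed
  qed
  obtain n where "(1/2::real)^n < \<delta> / measure M A"
    using real_arch_pow_inv[of "\<delta> / measure M A" "1/2"] A \<open>\<delta> > 0\<close> by auto
  then have "measure M A * (1/2)^n \<le> \<delta>"
    using A by (simp add: field_simps)
  then show ?thesis
    using halving[of n] that by force
qed

lemma exists_ge_half_Sup:
  fixes S :: "real set"
  assumes "bdd_above S" "x \<in> S" "0 \<le> x"
  shows "\<exists>y\<in>S. Sup S / 2 \<le> y"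
proof (cases "Sup S \<le> 0")
  case True
  then show ?thesis using assms by force
next
  case False
  then have "Sup S / 2 < Sup S" by simp
  then show ?thesis
    using assms by (subst (asm) less_cSup_iff) (auto intro: less_imp_le)
qed

text \<open>Greedy exhaustion: each stage adds a set of measure at least half the supremum of what may
  still be added, so these increments tend to \<open>0\<close> and bound every admissible remainder.\<close>

lemma (in prob_space) obtain_saturated_subset:
  assumes A: "A \<in> sets M" and t: "0 \<le> t"
  obtains B where "B \<in> sets M" "B \<subseteq> A" "measure M B \<le> t"
    "\<And>C. C \<in> sets M \<Longrightarrow> C \<subseteq> A - B \<Longrightarrow> measure M C \<le> t - measure M B \<Longrightarrow> measure M C = 0"
proof -
  define adm where "adm B C \<longleftrightarrow> C \<in> sets M \<and> C \<subseteq> A - B \<and> measure M C \<le> t - measure M B" for B C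
  define next_set where
    "next_set B = (SOME C. adm B C \<and> Sup (measure M ` {C. adm B C}) / 2 \<le> measure M C)" for B
  have bdd: "bdd_above (measure M ` {C. adm B C})" for B
    by (rule bdd_aboveI[of _ 1]) auto
  have next_set: "adm B (next_set B) \<and> Sup (measure M ` {C. adm B C}) / 2 \<le> measure M (next_set B)"
    if "measure M B \<le> t" for B
  proof -
    have "adm B {}" using that unfolding adm_def by auto
    then have "0 \<in> measure M ` {C. adm B C}"
      by (intro image_eqI[of _ _ "{}"]) simp_all
    then have "\<exists>y\<in>measure M ` {C. adm B C}. Sup (measure M ` {C. adm B C}) / 2 \<le> y"
      by (rule exists_ge_half_Sup[OF bdd]) simp
    then have "\<exists>C. adm B C \<and> Sup (measure M ` {C. adm B C}) / 2 \<le> measure M C"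
      by blast
    then show ?thesis unfolding next_set_def by (rule someI_ex)
  qed
  define Bs where "Bs = rec_nat {} (\<lambda>_ B. B \<union> next_set B)"
  have Bs_0: "Bs 0 = {}" and Bs_Suc: "Bs (Suc n) = Bs n \<union> next_set (Bs n)" for n
    unfolding Bs_def by simp_all
  have Bs: "Bs n \<in> sets M \<and> Bs n \<subseteq> A \<and> measure M (Bs n) \<le> t" for n
  proof (induction n)
    case 0
    then show ?case using t by (simp add: Bs_0)
  next
    case (Suc n)
    then have "adm (Bs n) (next_set (Bs n))" using next_set by blast
    moreover from this Suc have "measure M (Bs (Suc n)) = measure M (Bs n) + measure M (next_set (Bs n))"
      unfolding adm_def Bs_Suc by (intro finite_measure_Union) auto
    ultimately show ?case using Suc unfolding adm_def Bs_Suc by auto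
  qed
  have measure_Bs_Suc: "measure M (Bs (Suc n)) = measure M (Bs n) + measure M (next_set (Bs n))" for n
    using next_set[of "Bs n"] Bs[of n] unfolding adm_def Bs_Suc by (intro finite_measure_Union) auto
  define B where "B = (\<Union>n. Bs n)"
  have B: "B \<in> sets M" "B \<subseteq> A" unfolding B_def using Bs by auto
  have lim: "(\<lambda>n. measure M (Bs n)) \<longlonglongrightarrow> measure M B"
    unfolding B_def using Bs by (intro finite_Lim_measure_incseq) (auto simp: incseq_Suc_iff Bs_Suc)
  have Bs_le_B: "measure M (Bs n) \<le> measure M B" for n
    unfolding B_def using Bs by (intro finite_measure_mono) auto
  have "(\<lambda>n. measure M (Bs (Suc n)) - measure M (Bs n)) \<longlonglongrightarrow> measure M B - measure M B"
    using lim by (intro tendsto_diff LIMSEQ_Suc)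
  then have next_set_to_0: "(\<lambda>n. measure M (next_set (Bs n))) \<longlonglongrightarrow> 0"
    by (simp add: measure_Bs_Suc)
  show ?thesis
  proof (rule that[OF B])
    show "measure M B \<le> t"
      using lim Bs by (intro LIMSEQ_le_const2) auto
    fix C assume C: "C \<in> sets M" "C \<subseteq> A - B" "measure M C \<le> t - measure M B"
    have "measure M C / 2 \<le> measure M (next_set (Bs n))" for n
    proof -
      have "adm (Bs n) C" unfolding adm_def using C Bs_le_B[of n] B_def by auto
      then have "measure M C \<le> Sup (measure M ` {C. adm (Bs n) C})" by (intro cSup_upper bdd) auto
      then show ?thesis using next_set[of "Bs n"] Bs[of n] by auto
    qed
    then have "measure M C / 2 \<le> 0"
      using next_set_to_0 by (intro LIMSEQ_le_const) auto
    then show "measure M C = 0" using measure_nonneg[of M C] by simp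
  qed
qed

lemma (in prob_space) atomless_obtain_subset_measure:
  assumes "atomless M" and A: "A \<in> sets M" and t: "0 \<le> t" "t \<le> measure M A"
  obtains B where "B \<in> sets M" "B \<subseteq> A" "measure M B = t"
proof -
  obtain B where B: "B \<in> sets M" "B \<subseteq> A" "measure M B \<le> t"
    and saturated: "\<And>C. C \<in> sets M \<Longrightarrow> C \<subseteq> A - B \<Longrightarrow> measure M C \<le> t - measure M B \<Longrightarrow> measure M C = 0"
    using obtain_saturated_subset[OF A t(1)] by blast
  have "measure M B = t"
  proof (rule ccontr)
    assume "measure M B \<noteq> t"
    with B have "measure M B < t" by simp
    moreover have "measure M (A - B) = measure M A - measure M B"
      using A B by (simp add: finite_measure_Diff)
    ultimately have "measure M (A - B) > 0" using t by simp
    then obtain C where C: "C \<in> sets M" "C \<subseteq> A - B" "0 < measure M C" "measure M C \<le> t - measure M B"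
      using atomless_obtain_small[OF \<open>atomless M\<close>, of "A - B" "t - measure M B"] A B \<open>measure M B < t\<close>
      by auto
    then show False
      using saturated[OF C(1,2,4)] by simp
  qed
  with B that show ?thesis by blast
qed

section \<open>Distortion risk measures as expectation plus a correction\<close>

definition survival :: "'a measure \<Rightarrow> ('a \<Rightarrow> real) \<Rightarrow> real \<Rightarrow> real" where
  "survival M X x = measure M {\<omega> \<in> space M. X \<omega> > x}"

lemma (in prob_space) survival_nonneg: "0 \<le> survival M X x"
  and survival_le_1: "survival M X x \<le> 1"
  unfolding survival_def by auto

lemma (in prob_space) survival_antimono:
  assumes "X \<in> borel_measurable M" "x \<le> y"
  shows "survival M X y \<le> survival M X x"
  unfolding survival_def using assms by (intro finite_measure_mono) auto

lemma (in prob_space) one_minus_survival: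
  assumes "X \<in> borel_measurable M"
  shows "1 - survival M X x = measure M {\<omega> \<in> space M. X \<omega> \<le> x}"
proof -
  have "{\<omega> \<in> space M. X \<omega> \<le> x} = space M - {\<omega> \<in> space M. X \<omega> > x}" by auto
  then show ?thesis unfolding survival_def using assms by (simp add: prob_compl)
qed

lemma borel_measurable_antimono:
  fixes f :: "real \<Rightarrow> real"
  assumes "\<And>x y. x \<le> y \<Longrightarrow> f y \<le> f x"
  shows "f \<in> borel_measurable borel"
proof -
  have "(\<lambda>x. - f x) \<in> borel_measurable borel"
    using assms by (intro borel_measurable_mono) (auto simp: mono_def)
  then have "(\<lambda>x. - (- f x)) \<in> borel_measurable borel" by measurable
  then show ?thesis by simp
qed

lemma (in finite_measure) integral_measure_between:
  fixes a b :: "'a \<Rightarrow> real"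
  assumes [measurable]: "a \<in> borel_measurable M" "b \<in> borel_measurable M"
    and le: "\<And>\<omega>. \<omega> \<in> space M \<Longrightarrow> a \<omega> \<le> b \<omega>" and int: "integrable M (\<lambda>\<omega>. b \<omega> - a \<omega>)"
  shows "integrable lborel (\<lambda>x. measure M {\<omega> \<in> space M. a \<omega> \<le> x \<and> x < b \<omega>})"
    and "(\<integral>x. measure M {\<omega> \<in> space M. a \<omega> \<le> x \<and> x < b \<omega>} \<partial>lborel) = (\<integral>\<omega>. b \<omega> - a \<omega> \<partial>M)"
proof -
  interpret pair_sigma_finite M lborel ..
  define F :: "'a \<Rightarrow> real \<Rightarrow> ennreal" where "F \<omega> x = indicator {(\<omega>, x). a \<omega> \<le> x \<and> x < b \<omega>} (\<omega>, x)" for \<omega> x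
  have [measurable]: "case_prod F \<in> borel_measurable (M \<Otimes>\<^sub>M lborel)"
    unfolding F_def by measurable
  define m where "m x = measure M {\<omega> \<in> space M. a \<omega> \<le> x \<and> x < b \<omega>}" for x
  have [measurable]: "m \<in> borel_measurable lborel"
    unfolding m_def by measurable
  have "(\<integral>\<^sup>+x. ennreal (m x) \<partial>lborel) = (\<integral>\<^sup>+x. \<integral>\<^sup>+\<omega>. F \<omega> x \<partial>M \<partial>lborel)"
  proof (intro nn_integral_cong)
    fix x :: real
    have "ennreal (m x) = (\<integral>\<^sup>+\<omega>. indicator {\<omega> \<in> space M. a \<omega> \<le> x \<and> x < b \<omega>} \<omega> \<partial>M)"
      unfolding m_def by (simp add: emeasure_eq_measure)
    also have "\<dots> = (\<integral>\<^sup>+\<omega>. F \<omega> x \<partial>M)"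
      unfolding F_def by (intro nn_integral_cong) (auto simp: indicator_def)
    finally show "ennreal (m x) = (\<integral>\<^sup>+\<omega>. F \<omega> x \<partial>M)" .
  qed
  also have "\<dots> = (\<integral>\<^sup>+\<omega>. \<integral>\<^sup>+x. F \<omega> x \<partial>lborel \<partial>M)"
    by (rule Fubini') measurable
  also have "\<dots> = (\<integral>\<^sup>+\<omega>. ennreal (b \<omega> - a \<omega>) \<partial>M)"
  proof (intro nn_integral_cong)
    fix \<omega> assume "\<omega> \<in> space M"
    have "(\<integral>\<^sup>+x. F \<omega> x \<partial>lborel) = (\<integral>\<^sup>+x. indicator {a \<omega>..<b \<omega>} x \<partial>lborel)"
      unfolding F_def by (intro nn_integral_cong) (auto simp: indicator_def)
    then show "(\<integral>\<^sup>+x. F \<omega> x \<partial>lborel) = ennreal (b \<omega> - a \<omega>)"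
      using le[OF \<open>\<omega> \<in> space M\<close>] by simp
  qed
  also have "\<dots> = ennreal (\<integral>\<omega>. b \<omega> - a \<omega> \<partial>M)"
    using int le by (intro nn_integral_eq_integral) auto
  finally have "(\<integral>\<^sup>+x. ennreal (m x) \<partial>lborel) = ennreal (\<integral>\<omega>. b \<omega> - a \<omega> \<partial>M)" .
  moreover have "0 \<le> (\<integral>\<omega>. b \<omega> - a \<omega> \<partial>M)"
    using le by (intro integral_nonneg_AE) auto
  ultimately have "integrable lborel m \<and> integral\<^sup>L lborel m = (\<integral>\<omega>. b \<omega> - a \<omega> \<partial>M)"
    by (subst (asm) nn_integral_eq_integrable) (auto simp: m_def)
  then show "integrable lborel m" "integral\<^sup>L lborel m = (\<integral>\<omega>. b \<omega> - a \<omega> \<partial>M)" by auto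
qed

lemma (in prob_space) integrable_max_shift:
  fixes X :: "'a \<Rightarrow> real"
  assumes "integrable M X"
  shows "integrable M (\<lambda>\<omega>. max (X \<omega> - c) 0)" "integrable M (\<lambda>\<omega>. max (c - X \<omega>) 0)"
  by (rule Bochner_Integration.integrable_bound[where f="\<lambda>\<omega>. \<bar>X \<omega>\<bar> + \<bar>c\<bar>"];
      use assms in \<open>auto intro!: integrable_add\<close>)+

lemma (in prob_space) survival_above_eq_integral:
  assumes [measurable]: "X \<in> borel_measurable M" and X: "integrable M X"
  shows "integrable lborel (\<lambda>x. indicator {c..} x * survival M X x)"
    and "(\<integral>x. indicator {c..} x * survival M X x \<partial>lborel) = (\<integral>\<omega>. max (X \<omega> - c) 0 \<partial>M)"
proof -
  have "(\<lambda>x. indicator {c..} x * survival M X x)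
      = (\<lambda>x. measure M {\<omega> \<in> space M. c \<le> x \<and> x < max c (X \<omega>)})"
    unfolding survival_def by (auto simp: fun_eq_iff indicator_def max_def intro!: arg_cong[where f="measure M"])
  moreover have "(\<lambda>\<omega>. max c (X \<omega>) - c) = (\<lambda>\<omega>. max (X \<omega> - c) 0)"
    by (auto simp: max_def)
  ultimately show "integrable lborel (\<lambda>x. indicator {c..} x * survival M X x)"
    and "(\<integral>x. indicator {c..} x * survival M X x \<partial>lborel) = (\<integral>\<omega>. max (X \<omega> - c) 0 \<partial>M)"
    using integral_measure_between[of "\<lambda>_. c" "\<lambda>\<omega>. max c (X \<omega>)"] integrable_max_shift[OF X] by auto
qed

lemma (in prob_space) distribution_below_eq_integral:
  assumes [measurable]: "X \<in> borel_measurable M" and X: "integrable M X"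
  shows "integrable lborel (\<lambda>x. indicator {..<c} x * (1 - survival M X x))"
    and "(\<integral>x. indicator {..<c} x * (1 - survival M X x) \<partial>lborel) = (\<integral>\<omega>. max (c - X \<omega>) 0 \<partial>M)"
proof -
  have "(\<lambda>x. indicator {..<c} x * (1 - survival M X x))
      = (\<lambda>x. measure M {\<omega> \<in> space M. min c (X \<omega>) \<le> x \<and> x < c})"
    unfolding one_minus_survival[OF assms(1)]
    by (auto simp: fun_eq_iff indicator_def min_def intro!: arg_cong[where f="measure M"])
  moreover have "(\<lambda>\<omega>. c - min c (X \<omega>)) = (\<lambda>\<omega>. max (c - X \<omega>) 0)"
    by (auto simp: min_def max_def)
  ultimately show "integrable lborel (\<lambda>x. indicator {..<c} x * (1 - survival M X x))"
    and "(\<integral>x. indicator {..<c} x * (1 - survival M X x) \<partial>lborel) = (\<integral>\<omega>. max (c - X \<omega>) 0 \<partial>M)"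
    using integral_measure_between[of "\<lambda>\<omega>. min c (X \<omega>)" "\<lambda>_. c"] integrable_max_shift[OF X] by auto
qed

text \<open>The linear bounds at \<open>0\<close> and \<open>1\<close> make \<open>g \<circ> S - S\<close> integrable whenever \<open>X\<close> is, \<open>S\<close> being
  the survival function of \<open>X\<close>.\<close>

definition regular_distortion :: "(real \<Rightarrow> real) \<Rightarrow> bool" where
  "regular_distortion g \<longleftrightarrow> mono_on {0..1} g \<and> g 0 = 0 \<and> g 1 = 1
     \<and> (\<exists>K. \<forall>p\<in>{0..1}. g p \<le> K * p \<and> 1 - g p \<le> K * (1 - p))"

lemma regular_distortion_range:
  assumes "regular_distortion g" "0 \<le> p" "p \<le> 1"
  shows "0 \<le> g p" "g p \<le> 1"
  using assms mono_onD[of "{0..1}" g 0 p] mono_onD[of "{0..1}" g p 1]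
  unfolding regular_distortion_def by auto

lemma (in prob_space) integrable_distortion_excess:
  assumes g: "regular_distortion g" and [measurable]: "X \<in> borel_measurable M" and X: "integrable M X"
  shows "integrable lborel (\<lambda>x. g (survival M X x) - survival M X x)"
proof -
  define S where "S = survival M X"
  have S: "0 \<le> S x" "S x \<le> 1" for x
    unfolding S_def by (auto intro: survival_nonneg survival_le_1)
  obtain K where K: "\<forall>p\<in>{0..1}. g p \<le> K * p \<and> 1 - g p \<le> K * (1 - p)"
    using g unfolding regular_distortion_def by blast
  have "g 1 \<le> K * 1" using K[rule_format, of 1] by simp
  then have "1 \<le> K" using g by (simp add: regular_distortion_def)
  define pos where "pos x = indicator {0..} x * S x" for x :: real
  define neg where "neg x = indicator {..<0} x * (1 - S x)" for x :: real
  have "integrable lborel pos" "integrable lborel neg"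
    unfolding pos_def neg_def S_def
    using survival_above_eq_integral[OF _ X] distribution_below_eq_integral[OF _ X] by auto
  then have majorant: "integrable lborel (\<lambda>x. (K + 1) * (pos x + neg x))"
    by auto
  have S_antimono: "S y \<le> S x" if "x \<le> y" for x y
    unfolding S_def using that by (rule survival_antimono[rotated]) measurable
  have "(\<lambda>x. g (S x)) \<in> borel_measurable borel"
  proof (rule borel_measurable_antimono)
    fix x y :: real assume "x \<le> y"
    then show "g (S y) \<le> g (S x)"
      using g S[of x] S[of y] S_antimono unfolding regular_distortion_def by (simp add: mono_on_def)
  qed
  moreover have "S \<in> borel_measurable borel"
    using S_antimono by (rule borel_measurable_antimono)
  ultimately have "(\<lambda>x. g (S x) - S x) \<in> borel_measurable lborel"
    by measurable
  moreover have "norm (g (S x) - S x) \<le> norm ((K + 1) * (pos x + neg x))" for x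
  proof -
    have "g (S x) \<le> K * S x" "1 - g (S x) \<le> K * (1 - S x)" "0 \<le> g (S x)" "g (S x) \<le> 1"
      using K S[of x] regular_distortion_range[OF g S[of x]] by auto
    moreover have "0 \<le> K * S x" "0 \<le> K * (1 - S x)"
      using S[of x] \<open>1 \<le> K\<close> by auto
    ultimately have "\<bar>g (S x) - S x\<bar> \<le> (K + 1) * (pos x + neg x)"
      using S[of x] by (cases "0 \<le> x") (simp_all add: pos_def neg_def abs_le_iff algebra_simps)
    then show ?thesis by simp
  qed
  ultimately show ?thesis
    unfolding S_def by (rule Bochner_Integration.integrable_bound[OF majorant _ AE_I2])
qed

lemma (in prob_space) distortion_rm_eq_expectation_plus:
  assumes g: "regular_distortion g" and [measurable]: "X \<in> borel_measurable M" and X: "integrable M X"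
  shows "distortion_rm M g X = expectation X + (\<integral>x. g (survival M X x) - survival M X x \<partial>lborel)"
proof -
  define S where "S = survival M X"
  define pos where "pos x = indicator {0..} x * S x" for x :: real
  define neg where "neg x = indicator {..<0} x * (1 - S x)" for x :: real
  define D where "D x = g (S x) - S x" for x
  have pos: "integrable lborel pos" "integral\<^sup>L lborel pos = (\<integral>\<omega>. max (X \<omega> - 0) 0 \<partial>M)"
    unfolding pos_def S_def using survival_above_eq_integral[OF _ X] by auto
  have neg: "integrable lborel neg" "integral\<^sup>L lborel neg = (\<integral>\<omega>. max (0 - X \<omega>) 0 \<partial>M)"
    unfolding neg_def S_def using distribution_below_eq_integral[OF _ X] by auto
  have D: "integrable lborel D"
    unfolding D_def S_def using integrable_distortion_excess[OF g _ X] by simp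
  have E: "integral\<^sup>L lborel pos - integral\<^sup>L lborel neg = expectation X"
  proof -
    have "integral\<^sup>L lborel pos - integral\<^sup>L lborel neg = (\<integral>\<omega>. max (X \<omega> - 0) 0 - max (0 - X \<omega>) 0 \<partial>M)"
      using integrable_max_shift[OF X, of 0] by (simp only: pos(2) neg(2) Bochner_Integration.integral_diff)
    also have "\<dots> = expectation X"
      by (intro Bochner_Integration.integral_cong) auto
    finally show ?thesis .
  qed
  define \<Phi> where "\<Phi> x = pos x - neg x + D x" for x
  have \<Phi>: "integrable lborel \<Phi>"
    unfolding \<Phi>_def using pos neg D by auto
  have "distortion_rm M g X = (\<integral>x. indicator {0..} x * \<Phi> x \<partial>lborel) + (\<integral>x. indicator {..<0} x * \<Phi> x \<partial>lborel)"
    unfolding distortion_rm_def set_lebesgue_integral_def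
    by (intro arg_cong2[where f="(+)"] Bochner_Integration.integral_cong)
       (auto simp: \<Phi>_def pos_def neg_def D_def S_def survival_def indicator_def)
  also have "\<dots> = (\<integral>x. indicator {0..} x * \<Phi> x + indicator {..<0} x * \<Phi> x \<partial>lborel)"
    using \<Phi> by (simp add: integrable_real_mult_indicator mult.commute[of "indicator _ _"])
  also have "\<dots> = integral\<^sup>L lborel \<Phi>"
    by (intro Bochner_Integration.integral_cong) (auto simp: indicator_def)
  also have "\<dots> = integral\<^sup>L lborel pos - integral\<^sup>L lborel neg + integral\<^sup>L lborel D"
    unfolding \<Phi>_def using pos neg D by simp
  finally show ?thesis
    unfolding E D_def S_def .
qed

section \<open>Lower bounds from piecewise linear minorants\<close>

lemma (in prob_space) distortion_rm_ge_expectation: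
  assumes g: "regular_distortion g" and "X \<in> borel_measurable M" "integrable M X"
    and above: "\<And>p. 0 \<le> p \<Longrightarrow> p \<le> 1 \<Longrightarrow> p \<le> g p"
  shows "expectation X \<le> distortion_rm M g X"
proof -
  have "0 \<le> (\<integral>x. g (survival M X x) - survival M X x \<partial>lborel)"
    using above survival_nonneg survival_le_1 by (intro integral_nonneg_AE AE_I2) auto
  then show ?thesis
    using distortion_rm_eq_expectation_plus[OF assms(1-3)] by simp
qed

text \<open>\<open>E (hinge3 \<dots> X)\<close> is the integral over \<open>x\<close> of the affine minorant of slope \<open>m\<^sub>1\<close>, \<open>m\<^sub>2\<close> or
  \<open>m\<^sub>3\<close> (as \<open>x \<ge> t\<^sub>1\<close>, \<open>t\<^sub>2 \<le> x < t\<^sub>1\<close> or \<open>x < t\<^sub>2\<close>) of \<open>g p - p\<close>, evaluated at \<open>p = S(x)\<close>; the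
  middle minorant passes through \<open>(p\<^sub>1, m\<^sub>1 p\<^sub>1)\<close>.\<close>

definition hinge3 :: "real \<Rightarrow> real \<Rightarrow> real \<Rightarrow> real \<Rightarrow> real \<Rightarrow> real \<Rightarrow> real \<Rightarrow> real" where
  "hinge3 p1 m1 m2 m3 t1 t2 y = m1 * max (y - t1) 0
     + (m1 * p1 + m2 * (1 - p1)) * (max (y - t2) 0 - max (y - t1) 0)
     + p1 * (m1 - m2) * (max (t1 - y) 0 - max (t2 - y) 0) - m3 * max (t2 - y) 0"

lemma (in prob_space) distortion_rm_ge_hinge3:
  assumes g: "regular_distortion g" and [measurable]: "X \<in> borel_measurable M" and X: "integrable M X"
    and minor1: "\<And>p. 0 \<le> p \<Longrightarrow> p \<le> 1 \<Longrightarrow> m1 * p \<le> g p - p"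
    and minor2: "\<And>p. 0 \<le> p \<Longrightarrow> p \<le> 1 \<Longrightarrow> m1 * p1 + m2 * (p - p1) \<le> g p - p"
    and minor3: "\<And>p. 0 \<le> p \<Longrightarrow> p \<le> 1 \<Longrightarrow> m3 * (p - 1) \<le> g p - p"
    and "t2 \<le> t1"
  shows "expectation X + expectation (\<lambda>\<omega>. hinge3 p1 m1 m2 m3 t1 t2 (X \<omega>)) \<le> distortion_rm M g X"
proof -
  define S where "S = survival M X"
  have S: "0 \<le> S x" "S x \<le> 1" for x
    unfolding S_def by (auto intro: survival_nonneg survival_le_1)
  define u where "u c x = indicator {c..} x * S x" for c x :: real
  define v where "v c x = indicator {..<c} x * (1 - S x)" for c x :: real
  have u: "integrable lborel (u c)" "integral\<^sup>L lborel (u c) = (\<integral>\<omega>. max (X \<omega> - c) 0 \<partial>M)" for c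
    unfolding u_def S_def using survival_above_eq_integral[OF _ X] by auto
  have v: "integrable lborel (v c)" "integral\<^sup>L lborel (v c) = (\<integral>\<omega>. max (c - X \<omega>) 0 \<partial>M)" for c
    unfolding v_def S_def using distribution_below_eq_integral[OF _ X] by auto
  define L where "L x = m1 * u t1 x + (m1 * p1 + m2 * (1 - p1)) * (u t2 x - u t1 x)
    + p1 * (m1 - m2) * (v t1 x - v t2 x) - m3 * v t2 x" for x
  have "integral\<^sup>L lborel L = expectation (\<lambda>\<omega>. hinge3 p1 m1 m2 m3 t1 t2 (X \<omega>))"
    unfolding L_def hinge3_def using u v integrable_max_shift[OF X] by (simp add: u(2) v(2))
  moreover have "integral\<^sup>L lborel L \<le> (\<integral>x. g (S x) - S x \<partial>lborel)"
  proof (rule integral_mono)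
    show "integrable lborel L" unfolding L_def using u v by auto
    show "integrable lborel (\<lambda>x. g (S x) - S x)"
      unfolding S_def using integrable_distortion_excess[OF g _ X] by simp
    fix x
    consider "t1 \<le> x" | "t2 \<le> x" "x < t1" | "x < t2" by linarith
    then show "L x \<le> g (S x) - S x"
    proof cases
      case 1
      then show ?thesis using minor1[OF S] \<open>t2 \<le> t1\<close> by (simp add: L_def u_def v_def)
    next
      case 2
      then show ?thesis using minor2[OF S] by (simp add: L_def u_def v_def algebra_simps)
    next
      case 3
      then show ?thesis using minor3[OF S] \<open>t2 \<le> t1\<close> by (simp add: L_def u_def v_def algebra_simps)
    qed
  qed
  ultimately show ?thesis
    using distortion_rm_eq_expectation_plus[OF g _ X] unfolding S_def by simp
qed

text \<open>Completing the square: on each of the three pieces, \<open>2 c \<Phi>(y) + c\<^sup>2 V + (y - \<mu>)\<^sup>2\<close> is a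
  perfect square, the thresholds \<open>t\<^sub>1\<close>, \<open>t\<^sub>2\<close> being the points where consecutive squares agree.\<close>

lemma hinge3_ge_quadratic:
  fixes p1 p2 p3 m1 m2 m3 c y \<mu> :: real
  assumes p: "p1 + p2 + p3 = 1" and m: "p1 * m1 + p2 * m2 + p3 * m3 = 0" and "m1 \<le> m2" "m2 \<le> m3"
    and "c > 0"
  shows "- c * (p1 * m1\<^sup>2 + p2 * m2\<^sup>2 + p3 * m3\<^sup>2) / 2 - (y - \<mu>)\<^sup>2 / (2 * c)
    \<le> hinge3 p1 m1 m2 m3 (\<mu> - c * (m1 + m2) / 2) (\<mu> - c * (m2 + m3) / 2) y"
proof -
  define t1 where "t1 = \<mu> - c * (m1 + m2) / 2"
  define t2 where "t2 = \<mu> - c * (m2 + m3) / 2"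
  define t where "t = y - \<mu>"
  define V where "V = p1 * m1\<^sup>2 + p2 * m2\<^sup>2 + p3 * m3\<^sup>2"
  define F where "F = hinge3 p1 m1 m2 m3 t1 t2 y"
  have "t2 \<le> t1"
    unfolding t1_def t2_def using \<open>m1 \<le> m2\<close> \<open>m2 \<le> m3\<close> \<open>c > 0\<close> by (simp add: field_simps mult_left_mono)
  have "\<exists>m. 2 * c * F + c\<^sup>2 * V + t\<^sup>2 = (t + c * m)\<^sup>2"
  proof -
    consider "t1 \<le> y" | "t2 \<le> y" "y < t1" | "y < t2" by linarith
    then show ?thesis
    proof cases
      case 1
      then have "F = m1 * (y - t1) + (m1 * p1 + m2 * (1 - p1)) * (t1 - t2)"
        using \<open>t2 \<le> t1\<close> by (simp add: F_def hinge3_def max_def)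
      then have "2 * c * F + c\<^sup>2 * V + t\<^sup>2 = (t + c * m1)\<^sup>2"
        using p m unfolding V_def t_def t1_def t2_def by algebra
      then show ?thesis ..
    next
      case 2
      then have "F = (m1 * p1 + m2 * (1 - p1)) * (y - t2) + p1 * (m1 - m2) * (t1 - y)"
        by (simp add: F_def hinge3_def max_def)
      then have "2 * c * F + c\<^sup>2 * V + t\<^sup>2 = (t + c * m2)\<^sup>2"
        using p m unfolding V_def t_def t1_def t2_def by algebra
      then show ?thesis ..
    next
      case 3
      then have "F = p1 * (m1 - m2) * (t1 - t2) - m3 * (t2 - y)"
        using \<open>t2 \<le> t1\<close> by (simp add: F_def hinge3_def max_def)
      then have "2 * c * F + c\<^sup>2 * V + t\<^sup>2 = (t + c * m3)\<^sup>2"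
        using p m unfolding V_def t_def t1_def t2_def by algebra
      then show ?thesis ..
    qed
  qed
  then have "0 \<le> 2 * c * F + c\<^sup>2 * V + t\<^sup>2" by auto
  then show ?thesis
    using \<open>c > 0\<close> unfolding F_def t1_def t2_def V_def[symmetric] t_def[symmetric]
    by (simp add: field_simps power2_eq_square)
qed

lemma (in prob_space) Vset_D:
  assumes "X \<in> Vset M \<mu> \<sigma>"
  shows "X \<in> borel_measurable M" "integrable M X" "integrable M (\<lambda>\<omega>. (X \<omega> - \<mu>)\<^sup>2)"
    and "expectation X = \<mu>" "expectation (\<lambda>\<omega>. (X \<omega> - \<mu>)\<^sup>2) = \<sigma>\<^sup>2"
proof -
  show X[measurable]: "X \<in> borel_measurable M"
    and "expectation X = \<mu>" "expectation (\<lambda>\<omega>. (X \<omega> - \<mu>)\<^sup>2) = \<sigma>\<^sup>2"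
    using assms unfolding Vset_def by simp_all
  have sq: "integrable M (\<lambda>\<omega>. (X \<omega>)\<^sup>2)"
    using assms unfolding Vset_def by simp
  then show int: "integrable M X"
    by (rule square_integrable_imp_integrable[OF X])
  have "(\<lambda>\<omega>. (X \<omega> - \<mu>)\<^sup>2) = (\<lambda>\<omega>. (X \<omega>)\<^sup>2 - 2 * \<mu> * X \<omega> + \<mu>\<^sup>2)"
    by (simp add: fun_eq_iff power2_eq_square algebra_simps)
  then show "integrable M (\<lambda>\<omega>. (X \<omega> - \<mu>)\<^sup>2)"
    using sq int by simp
qed

text \<open>The lower bound \<open>\<mu> - \<sigma> \<parallel>\<psi>'\<parallel>\<^sub>2\<close> for the convex piecewise linear minorant \<open>\<psi>\<close> of
  \<open>g p - p\<close> with slopes \<open>m\<^sub>i\<close> on consecutive intervals of lengths \<open>p\<^sub>i\<close>; the free scale \<open>c\<close> of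
  the quadratic bound is optimised to \<open>\<sigma> / \<parallel>\<psi>'\<parallel>\<^sub>2\<close>.\<close>

lemma (in prob_space) distortion_rm_ge_three_slope:
  assumes g: "regular_distortion g" and X: "X \<in> Vset M \<mu> \<sigma>" and "\<sigma> > 0"
    and p: "p1 + p2 + p3 = 1" and m: "p1 * m1 + p2 * m2 + p3 * m3 = 0" "m1 \<le> m2" "m2 \<le> m3"
    and V: "0 < p1 * m1\<^sup>2 + p2 * m2\<^sup>2 + p3 * m3\<^sup>2"
    and minor1: "\<And>p. 0 \<le> p \<Longrightarrow> p \<le> 1 \<Longrightarrow> m1 * p \<le> g p - p"
    and minor2: "\<And>p. 0 \<le> p \<Longrightarrow> p \<le> 1 \<Longrightarrow> m1 * p1 + m2 * (p - p1) \<le> g p - p"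
    and minor3: "\<And>p. 0 \<le> p \<Longrightarrow> p \<le> 1 \<Longrightarrow> m3 * (p - 1) \<le> g p - p"
  shows "\<mu> - \<sigma> * sqrt (p1 * m1\<^sup>2 + p2 * m2\<^sup>2 + p3 * m3\<^sup>2) \<le> distortion_rm M g X"
proof -
  note X_facts = Vset_D[OF X]
  note [measurable] = X_facts(1)
  define r where "r = sqrt (p1 * m1\<^sup>2 + p2 * m2\<^sup>2 + p3 * m3\<^sup>2)"
  have "r > 0" and r2: "r\<^sup>2 = p1 * m1\<^sup>2 + p2 * m2\<^sup>2 + p3 * m3\<^sup>2"
    unfolding r_def using V by auto
  define c where "c = \<sigma> / r"
  have "c > 0" unfolding c_def using \<open>\<sigma> > 0\<close> \<open>r > 0\<close> by simp
  define t1 where "t1 = \<mu> - c * (m1 + m2) / 2"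
  define t2 where "t2 = \<mu> - c * (m2 + m3) / 2"
  define \<Phi> where "\<Phi> = hinge3 p1 m1 m2 m3 t1 t2"
  have "t2 \<le> t1"
    unfolding t1_def t2_def using m \<open>c > 0\<close> by (simp add: field_simps mult_left_mono)
  have "\<mu> + expectation (\<lambda>\<omega>. \<Phi> (X \<omega>)) \<le> distortion_rm M g X"
    using distortion_rm_ge_hinge3[OF g X_facts(1,2) minor1 minor2 minor3 \<open>t2 \<le> t1\<close>] X_facts(4)
    unfolding \<Phi>_def by simp
  moreover have "expectation (\<lambda>\<omega>. - c * r\<^sup>2 / 2 - (X \<omega> - \<mu>)\<^sup>2 / (2 * c)) \<le> expectation (\<lambda>\<omega>. \<Phi> (X \<omega>))"
  proof (rule integral_mono)
    show "integrable M (\<lambda>\<omega>. - c * r\<^sup>2 / 2 - (X \<omega> - \<mu>)\<^sup>2 / (2 * c))"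
      using X_facts(3) by auto
    show "integrable M (\<lambda>\<omega>. \<Phi> (X \<omega>))"
      unfolding \<Phi>_def hinge3_def using integrable_max_shift[OF X_facts(2)] by auto
    show "- c * r\<^sup>2 / 2 - (X \<omega> - \<mu>)\<^sup>2 / (2 * c) \<le> \<Phi> (X \<omega>)" for \<omega>
      unfolding \<Phi>_def t1_def t2_def r2 using hinge3_ge_quadratic[OF p m \<open>c > 0\<close>] by blast
  qed
  moreover have "expectation (\<lambda>\<omega>. - c * r\<^sup>2 / 2 - (X \<omega> - \<mu>)\<^sup>2 / (2 * c)) = - c * r\<^sup>2 / 2 - \<sigma>\<^sup>2 / (2 * c)"
    using X_facts(3,5) by (simp add: prob_space)
  moreover have "- c * r\<^sup>2 / 2 - \<sigma>\<^sup>2 / (2 * c) = - \<sigma> * r"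
    using \<open>r > 0\<close> \<open>\<sigma> > 0\<close> by (simp add: c_def field_simps power2_eq_square)
  ultimately show ?thesis unfolding r_def by simp
qed

lemma (in prob_space) distortion_rm_ge_two_slope:
  assumes g: "regular_distortion g" and X: "X \<in> Vset M \<mu> \<sigma>" and "\<sigma> > 0"
    and q: "0 < q" "q < 1" and "u < 0"
    and minor1: "\<And>p. 0 \<le> p \<Longrightarrow> p \<le> 1 \<Longrightarrow> p + u * p / q \<le> g p"
    and minor2: "\<And>p. 0 \<le> p \<Longrightarrow> p \<le> 1 \<Longrightarrow> p + u * (1 - p) / (1 - q) \<le> g p"
  shows "\<mu> + \<sigma> * u / sqrt (q * (1 - q)) \<le> distortion_rm M g X"
proof -
  define m1 where "m1 = u / q"
  define m3 where "m3 = - u / (1 - q)"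
  have "q * m1 + 0 * m1 + (1 - q) * m3 = 0"
    unfolding m1_def m3_def using q by simp
  moreover have "m1 \<le> m3"
  proof -
    have "u / q \<le> 0" "0 \<le> - u / (1 - q)"
      using q \<open>u < 0\<close> by (simp_all add: divide_nonpos_pos)
    then show ?thesis unfolding m1_def m3_def by linarith
  qed
  moreover have "q * m1\<^sup>2 + 0 * m1\<^sup>2 + (1 - q) * m3\<^sup>2 = u\<^sup>2 / (q * (1 - q))"
  proof -
    have "q * m1\<^sup>2 = u\<^sup>2 / q" "(1 - q) * m3\<^sup>2 = u\<^sup>2 / (1 - q)"
      unfolding m1_def m3_def using q by (simp_all add: power2_eq_square)
    moreover have "u\<^sup>2 / q + u\<^sup>2 / (1 - q) = u\<^sup>2 / (q * (1 - q))"
      using q by (simp add: field_simps)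
    ultimately show ?thesis by simp
  qed
  moreover have "0 < u\<^sup>2 / (q * (1 - q))"
    using q \<open>u < 0\<close> by simp
  moreover have "m1 * p = u * p / q" "m1 * q + m1 * (p - q) = u * p / q"
    and "m3 * (p - 1) = u * (1 - p) / (1 - q)" for p
    unfolding m1_def m3_def using q by (simp_all add: field_simps)
  then have "m1 * p \<le> g p - p" "m1 * q + m1 * (p - q) \<le> g p - p" "m3 * (p - 1) \<le> g p - p"
    if "0 \<le> p" "p \<le> 1" for p
    using minor1[OF that] minor2[OF that] by simp_all
  ultimately have "\<mu> - \<sigma> * sqrt (u\<^sup>2 / (q * (1 - q))) \<le> distortion_rm M g X"
    using distortion_rm_ge_three_slope[OF g X \<open>\<sigma> > 0\<close>, of q 0 "1 - q" m1 m1 m3] by simp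
  moreover have "sqrt (u\<^sup>2 / (q * (1 - q))) = - u / sqrt (q * (1 - q))"
    using \<open>u < 0\<close> by (simp add: real_sqrt_divide)
  ultimately show ?thesis by simp
qed

section \<open>Three-point distributions\<close>

lemma (in prob_space) atomless_obtain_disjoint_pair:
  assumes "atomless M" "0 \<le> p1" "0 \<le> p2" "p1 + p2 \<le> 1"
  obtains B1 B2 where "B1 \<in> sets M" "B2 \<in> sets M" "B1 \<inter> B2 = {}" "measure M B1 = p1" "measure M B2 = p2"
proof -
  obtain B1 where B1: "B1 \<in> sets M" "B1 \<subseteq> space M" "measure M B1 = p1"
    using atomless_obtain_subset_measure[OF assms(1) sets.top, of p1] assms
    by (auto simp: prob_space)
  have "measure M (space M - B1) = 1 - p1"
    using B1 by (simp add: prob_compl)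
  then obtain B2 where "B2 \<in> sets M" "B2 \<subseteq> space M - B1" "measure M B2 = p2"
    using atomless_obtain_subset_measure[OF assms(1), of "space M - B1" p2] assms B1
    by auto
  with B1 that show ?thesis by blast
qed

definition three_valued :: "'a set \<Rightarrow> 'a set \<Rightarrow> real \<Rightarrow> real \<Rightarrow> real \<Rightarrow> 'a \<Rightarrow> real" where
  "three_valued B1 B2 z1 z2 z3 \<omega> = (if \<omega> \<in> B1 then z1 else if \<omega> \<in> B2 then z2 else z3)"

context prob_space
begin

context
  fixes B1 B2 :: "'a set" and z1 z2 z3 :: real
  assumes B: "B1 \<in> sets M" "B2 \<in> sets M" "B1 \<inter> B2 = {}"
begin

lemma three_valued_measurable[measurable]: "three_valued B1 B2 z1 z2 z3 \<in> borel_measurable M"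
  unfolding three_valued_def using B by measurable

lemma
  fixes f :: "real \<Rightarrow> real"
  shows integrable_three_valued: "integrable M (\<lambda>\<omega>. f (three_valued B1 B2 z1 z2 z3 \<omega>))"
    and expectation_three_valued: "expectation (\<lambda>\<omega>. f (three_valued B1 B2 z1 z2 z3 \<omega>))
      = f z3 + (f z1 - f z3) * measure M B1 + (f z2 - f z3) * measure M B2"
proof -
  have eq: "(\<lambda>\<omega>. f (three_valued B1 B2 z1 z2 z3 \<omega>))
      = (\<lambda>\<omega>. f z3 + (f z1 - f z3) * indicator B1 \<omega> + (f z2 - f z3) * indicator B2 \<omega>)"
    using B unfolding three_valued_def by (auto simp: indicator_def fun_eq_iff)
  have [simp]: "integrable M (indicator B1 :: 'a \<Rightarrow> real)" "integrable M (indicator B2 :: 'a \<Rightarrow> real)"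
    using B by (simp_all add: less_top[symmetric])
  show "integrable M (\<lambda>\<omega>. f (three_valued B1 B2 z1 z2 z3 \<omega>))"
    unfolding eq by simp
  show "expectation (\<lambda>\<omega>. f (three_valued B1 B2 z1 z2 z3 \<omega>))
      = f z3 + (f z1 - f z3) * measure M B1 + (f z2 - f z3) * measure M B2"
    unfolding eq using B by (simp add: prob_space)
qed

lemma survival_three_valued:
  assumes "z3 \<le> z2" "z2 \<le> z1"
  shows "survival M (three_valued B1 B2 z1 z2 z3) x = (if z1 \<le> x then 0 else if z2 \<le> x then measure M B1
      else if z3 \<le> x then measure M B1 + measure M B2 else 1)"
proof -
  consider "z1 \<le> x" | "z2 \<le> x" "x < z1" | "z3 \<le> x" "x < z2" | "x < z3" by linarith
  then show ?thesis
  proof cases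
    case 1
    then have e: "{\<omega> \<in> space M. three_valued B1 B2 z1 z2 z3 \<omega> > x} = {}"
      using assms unfolding three_valued_def by auto
    then show ?thesis using 1 unfolding survival_def e by simp
  next
    case 2
    then have e: "{\<omega> \<in> space M. three_valued B1 B2 z1 z2 z3 \<omega> > x} = B1"
      using assms B sets.sets_into_space unfolding three_valued_def by auto
    then show ?thesis using 2 unfolding survival_def e by simp
  next
    case 3
    then have e: "{\<omega> \<in> space M. three_valued B1 B2 z1 z2 z3 \<omega> > x} = B1 \<union> B2"
      using assms B sets.sets_into_space unfolding three_valued_def by auto
    then show ?thesis using 3 B assms unfolding survival_def e by (simp add: finite_measure_Union)
  next
    case 4
    then have e: "{\<omega> \<in> space M. three_valued B1 B2 z1 z2 z3 \<omega> > x} = space M"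
      using assms unfolding three_valued_def by auto
    then show ?thesis using 4 assms unfolding survival_def e by (simp add: prob_space)
  qed
qed

lemma distortion_rm_three_valued:
  assumes g: "regular_distortion g" and z: "z3 \<le> z2" "z2 \<le> z1"
  shows "distortion_rm M g (three_valued B1 B2 z1 z2 z3) = expectation (three_valued B1 B2 z1 z2 z3)
    + (g (measure M B1 + measure M B2) - (measure M B1 + measure M B2)) * (z2 - z3)
    + (g (measure M B1) - measure M B1) * (z1 - z2)"
proof -
  define q1 where "q1 = measure M B1"
  define q2 where "q2 = measure M B1 + measure M B2"
  have "g 0 = 0" "g 1 = 1" using g unfolding regular_distortion_def by auto
  then have "g (survival M (three_valued B1 B2 z1 z2 z3) x) - survival M (three_valued B1 B2 z1 z2 z3) x
      = (g q1 - q1) * indicator {z2..<z1} x + (g q2 - q2) * indicator {z3..<z2} x" for x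
    unfolding survival_three_valued[OF z] q1_def q2_def using z by (auto simp: indicator_def)
  then have "(\<integral>x. g (survival M (three_valued B1 B2 z1 z2 z3) x) - survival M (three_valued B1 B2 z1 z2 z3) x \<partial>lborel)
      = (g q1 - q1) * (z1 - z2) + (g q2 - q2) * (z2 - z3)"
    using z by (simp add: integrable_real_mult_indicator mult.commute[of _ "indicator _ _"])
  then show ?thesis
    using distortion_rm_eq_expectation_plus[OF g three_valued_measurable]
      integrable_three_valued[of "\<lambda>x. x"]
    unfolding q1_def q2_def by simp
qed

end

end

definition three_point_variance :: "real \<Rightarrow> real \<Rightarrow> real \<Rightarrow> real \<Rightarrow> real \<Rightarrow> real \<Rightarrow> real" where
  "three_point_variance p1 p2 p3 w1 w2 w3
     = p1 * w1\<^sup>2 + p2 * w2\<^sup>2 + p3 * w3\<^sup>2 - (p1 * w1 + p2 * w2 + p3 * w3)\<^sup>2"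

lemma three_point_standardization:
  fixes p1 p2 p3 w1 w2 w3 \<mu> \<sigma> :: real
  assumes p: "p1 + p2 + p3 = 1" and W: "0 < three_point_variance p1 p2 p3 w1 w2 w3"
  defines "z w \<equiv> \<mu> + \<sigma> * (w - (p1 * w1 + p2 * w2 + p3 * w3)) / sqrt (three_point_variance p1 p2 p3 w1 w2 w3)"
  shows "p1 * z w1 + p2 * z w2 + p3 * z w3 = \<mu>"
    and "p1 * (z w1 - \<mu>)\<^sup>2 + p2 * (z w2 - \<mu>)\<^sup>2 + p3 * (z w3 - \<mu>)\<^sup>2 = \<sigma>\<^sup>2"
proof -
  define r where "r = sqrt (three_point_variance p1 p2 p3 w1 w2 w3)"
  have "r > 0" and r2: "r\<^sup>2 = three_point_variance p1 p2 p3 w1 w2 w3"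
    unfolding r_def using W by auto
  define wb where "wb = p1 * w1 + p2 * w2 + p3 * w3"
  have z: "z w = \<mu> + \<sigma> * (w - wb) / r" for w
    unfolding z_def r_def wb_def ..
  have "p1 * z w1 + p2 * z w2 + p3 * z w3 = (p1 + p2 + p3) * \<mu> + \<sigma> * (wb - (p1 + p2 + p3) * wb) / r"
    unfolding z using \<open>r > 0\<close> by (simp add: wb_def field_simps)
  then show "p1 * z w1 + p2 * z w2 + p3 * z w3 = \<mu>"
    using p by simp
  have zsq: "(z w - \<mu>)\<^sup>2 = (\<sigma> / r)\<^sup>2 * (w - wb)\<^sup>2" for w
    unfolding z by (simp add: power_mult_distrib[symmetric])
  have "p1 * (z w1 - \<mu>)\<^sup>2 + p2 * (z w2 - \<mu>)\<^sup>2 + p3 * (z w3 - \<mu>)\<^sup>2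
      = (\<sigma> / r)\<^sup>2 * (p1 * (w1 - wb)\<^sup>2 + p2 * (w2 - wb)\<^sup>2 + p3 * (w3 - wb)\<^sup>2)"
    unfolding zsq by (simp add: algebra_simps)
  also have "p1 * (w1 - wb)\<^sup>2 + p2 * (w2 - wb)\<^sup>2 + p3 * (w3 - wb)\<^sup>2 = r\<^sup>2"
    using p unfolding r2 three_point_variance_def wb_def by algebra
  finally show "p1 * (z w1 - \<mu>)\<^sup>2 + p2 * (z w2 - \<mu>)\<^sup>2 + p3 * (z w3 - \<mu>)\<^sup>2 = \<sigma>\<^sup>2"
    using \<open>r > 0\<close> by (simp add: power_divide)
qed

lemma (in prob_space) three_point_attains:
  assumes "atomless M" and g: "regular_distortion g" and "\<sigma> > 0"
    and p: "0 \<le> p1" "0 \<le> p2" "0 \<le> p3" "p1 + p2 + p3 = 1"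
    and w: "w3 \<le> w2" "w2 \<le> w1" and W: "0 < three_point_variance p1 p2 p3 w1 w2 w3"
  shows "\<exists>X\<in>Vset M \<mu> \<sigma>. distortion_rm M g X = \<mu> + \<sigma> * ((g (p1 + p2) - (p1 + p2)) * (w2 - w3)
    + (g p1 - p1) * (w1 - w2)) / sqrt (three_point_variance p1 p2 p3 w1 w2 w3)"
proof -
  define r where "r = sqrt (three_point_variance p1 p2 p3 w1 w2 w3)"
  have "r > 0"
    unfolding r_def using W by auto
  define z where "z w = \<mu> + \<sigma> * (w - (p1 * w1 + p2 * w2 + p3 * w3)) / r" for w
  have z_mono: "z a \<le> z b" if "a \<le> b" for a b
    unfolding z_def using that \<open>\<sigma> > 0\<close> \<open>r > 0\<close> by (simp add: divide_right_mono)
  obtain B1 B2 where B: "B1 \<in> sets M" "B2 \<in> sets M" "B1 \<inter> B2 = {}"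
    and B_measure: "measure M B1 = p1" "measure M B2 = p2"
    using atomless_obtain_disjoint_pair[OF \<open>atomless M\<close>, of p1 p2] p by auto
  define X where "X = three_valued B1 B2 (z w1) (z w2) (z w3)"
  note [measurable] = three_valued_measurable[OF B, of "z w1" "z w2" "z w3"]
  have E: "expectation (\<lambda>\<omega>. f (X \<omega>)) = p1 * f (z w1) + p2 * f (z w2) + p3 * f (z w3)" for f
  proof -
    have p3: "p3 = 1 - p1 - p2" using p(4) by simp
    show ?thesis
      unfolding X_def expectation_three_valued[OF B] B_measure p3 by (simp add: algebra_simps)
  qed
  have "expectation X = \<mu>" "expectation (\<lambda>\<omega>. (X \<omega> - \<mu>)\<^sup>2) = \<sigma>\<^sup>2"
    using E[of "\<lambda>x. x"] E[of "\<lambda>x. (x - \<mu>)\<^sup>2"] three_point_standardization[OF p(4) W, of \<mu> \<sigma>]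
    unfolding z_def r_def by simp_all
  then have "X \<in> Vset M \<mu> \<sigma>"
    unfolding Vset_def X_def using integrable_three_valued[OF B, where f="\<lambda>x. x\<^sup>2"] by simp
  moreover have "distortion_rm M g X = \<mu> + \<sigma> * ((g (p1 + p2) - (p1 + p2)) * (w2 - w3)
    + (g p1 - p1) * (w1 - w2)) / r"
  proof -
    have zdiff: "z a - z b = \<sigma> * (a - b) / r" for a b
      unfolding z_def by (simp add: diff_divide_distrib[symmetric] algebra_simps)
    have "distortion_rm M g X = \<mu> + (g (p1 + p2) - (p1 + p2)) * (z w2 - z w3) + (g p1 - p1) * (z w1 - z w2)"
      using distortion_rm_three_valued[OF B g z_mono[OF w(1)] z_mono[OF w(2)]] \<open>expectation X = \<mu>\<close>
      unfolding X_def[symmetric] B_measure by simp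
    also have "\<dots> = \<mu> + \<sigma> * ((g (p1 + p2) - (p1 + p2)) * (w2 - w3) + (g p1 - p1) * (w1 - w2)) / r"
      unfolding zdiff using \<open>r > 0\<close> by (simp add: field_simps)
    finally show ?thesis .
  qed
  ultimately show ?thesis unfolding r_def by blast
qed

lemma (in prob_space) two_point_attains:
  assumes "atomless M" and g: "regular_distortion g" and "\<sigma> > 0" and "0 < q" "q < 1"
  shows "\<exists>X\<in>Vset M \<mu> \<sigma>. distortion_rm M g X = \<mu> + \<sigma> * (g q - q) / sqrt (q * (1 - q))"
proof -
  have "three_point_variance 0 q (1 - q) 1 1 0 = q * (1 - q)"
    unfolding three_point_variance_def by (simp add: power2_eq_square algebra_simps)
  moreover have "g 0 = 0" using g unfolding regular_distortion_def by simp
  ultimately show ?thesis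
    using three_point_attains[OF assms(1-3), of 0 q "1 - q" 0 1 1 \<mu>] assms by simp
qed

lemma INF_le_limit:
  fixes f :: "'b \<Rightarrow> real" and F :: "'c filter"
  assumes "F \<noteq> bot" and "eventually (\<lambda>e. \<exists>X\<in>V. f X = v e) F" and "(v \<longlongrightarrow> T) F"
  shows "(INF X\<in>V. ereal (f X)) \<le> ereal T"
proof (rule tendsto_lowerbound)
  show "((\<lambda>e. ereal (v e)) \<longlongrightarrow> ereal T) F" using assms(3) by simp
  show "eventually (\<lambda>e. (INF X\<in>V. ereal (f X)) \<le> ereal (v e)) F"
    using assms(2) by eventually_elim (auto intro: INF_lower2)
qed (use assms(1) in simp)

text \<open>Moving mass \<open>e \<rightarrow> 0\<^sup>+\<close> from the middle to the bottom atom evaluates \<open>g\<close> just left of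
  \<open>p\<^sub>1 + p\<^sub>2\<close>: this approximates the value at a jump of \<open>g\<close> that no single distribution attains.\<close>

lemma (in prob_space) INF_distortion_rm_le_three_point_limit:
  assumes "atomless M" and g: "regular_distortion g" and "\<sigma> > 0"
    and p: "0 \<le> p1" "0 < p2" "0 \<le> p3" "p1 + p2 + p3 = 1"
    and w: "w3 \<le> w2" "w2 \<le> w1" and W: "0 < three_point_variance p1 p2 p3 w1 w2 w3"
    and L: "(g \<longlongrightarrow> L) (at_left (p1 + p2))"
  shows "(INF X\<in>Vset M \<mu> \<sigma>. ereal (distortion_rm M g X))
    \<le> ereal (\<mu> + \<sigma> * ((L - (p1 + p2)) * (w2 - w3) + (g p1 - p1) * (w1 - w2))
        / sqrt (three_point_variance p1 p2 p3 w1 w2 w3))"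
proof (rule INF_le_limit)
  define W where "W e = three_point_variance p1 (p2 - e) (p3 + e) w1 w2 w3" for e
  have "(W \<longlongrightarrow> W 0) (at_right 0)"
    unfolding W_def three_point_variance_def by (intro tendsto_intros)
  then have "eventually (\<lambda>e. 0 < W e) (at_right 0)"
    using W unfolding W_def by (intro order_tendstoD) simp_all
  moreover have "eventually (\<lambda>e. e < p2) (at_right 0)"
    using p(2) eventually_at_right_field by blast
  moreover have "eventually (\<lambda>e. 0 < e) (at_right (0::real))"
    by (simp add: eventually_at_right_less)
  ultimately show "eventually (\<lambda>e. \<exists>X\<in>Vset M \<mu> \<sigma>. distortion_rm M g X = \<mu> + \<sigma> * ((g (p1 + p2 - e)
      - (p1 + p2 - e)) * (w2 - w3) + (g p1 - p1) * (w1 - w2)) / sqrt (W e)) (at_right 0)"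
  proof eventually_elim
    case (elim e)
    then show ?case
      using three_point_attains[OF assms(1-3), of p1 "p2 - e" "p3 + e" w3 w2 w1 \<mu>] p w
      unfolding W_def by (simp add: algebra_simps)
  qed
  have shift: "((\<lambda>e. p1 + p2 - e) \<longlongrightarrow> p1 + p2) (at_right 0)"
    by (auto intro!: tendsto_eq_intros)
  have "filterlim (\<lambda>e. p1 + p2 - e) (at_left (p1 + p2)) (at_right 0)"
    using shift by (rule filterlim_at_withinI) (auto simp: eventually_at_filter)
  then have "((\<lambda>e. g (p1 + p2 - e)) \<longlongrightarrow> L) (at_right 0)"
    using L by (rule filterlim_compose[rotated])
  then show "((\<lambda>e. \<mu> + \<sigma> * ((g (p1 + p2 - e) - (p1 + p2 - e)) * (w2 - w3) + (g p1 - p1) * (w1 - w2))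
      / sqrt (W e)) \<longlongrightarrow> \<mu> + \<sigma> * ((L - (p1 + p2)) * (w2 - w3) + (g p1 - p1) * (w1 - w2))
        / sqrt (three_point_variance p1 p2 p3 w1 w2 w3)) (at_right 0)"
    using \<open>(W \<longlongrightarrow> W 0) (at_right 0)\<close> W shift unfolding W_def by (auto intro!: tendsto_intros)
qed simp

section \<open>The GlueVaR distortion\<close>

context
  fixes \<alpha> \<beta> h1 h2 :: real
  assumes ab: "0 < \<alpha>" "\<alpha> < \<beta>" "\<beta> < 1" and h: "0 \<le> h1" "h1 \<le> h2" "h2 < 1"
begin

lemma gluevar_middle:
  assumes "1 - \<beta> \<le> p" "p < 1 - \<alpha>"
  obtains t where "0 \<le> t" "t \<le> 1" "p = (1 - \<beta>) + t * (\<beta> - \<alpha>)"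
    "gluevar h1 h2 \<beta> \<alpha> p = (1 - t) * h1 + t * h2"
proof
  define t where "t = (p - (1 - \<beta>)) / (\<beta> - \<alpha>)"
  show "0 \<le> t" "t \<le> 1" "p = (1 - \<beta>) + t * (\<beta> - \<alpha>)"
    unfolding t_def using assms ab by (auto simp: field_simps)
  have "gluevar h1 h2 \<beta> \<alpha> p = h1 + (h2 - h1) * t"
    unfolding t_def gluevar_def using assms by simp
  then show "gluevar h1 h2 \<beta> \<alpha> p = (1 - t) * h1 + t * h2"
    by (simp add: algebra_simps)
qed

lemma gluevar_lower:
  assumes "0 \<le> p" "p < 1 - \<beta>"
  obtains t where "0 \<le> t" "t \<le> 1" "p = t * (1 - \<beta>)" "gluevar h1 h2 \<beta> \<alpha> p = t * h1"
proof
  define t where "t = p / (1 - \<beta>)"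
  show "0 \<le> t" "t \<le> 1" "p = t * (1 - \<beta>)"
    unfolding t_def using assms ab by (auto simp: field_simps)
  show "gluevar h1 h2 \<beta> \<alpha> p = t * h1"
    unfolding t_def gluevar_def using assms by simp
qed

lemma gluevar_upper: "1 - \<alpha> \<le> p \<Longrightarrow> gluevar h1 h2 \<beta> \<alpha> p = 1"
  using ab unfolding gluevar_def by simp

lemma gluevar_at_1_minus_\<beta>: "gluevar h1 h2 \<beta> \<alpha> (1 - \<beta>) = h1"
  using ab unfolding gluevar_def by simp

text \<open>A line lies below the piecewise linear \<open>gluevar\<close> on \<open>[0, 1]\<close> as soon as it does at the
  corners \<open>0, 1 - \<beta>, 1 - \<alpha>\<close> (left limit \<open>h\<^sub>2\<close>) and \<open>1\<close>.\<close>

lemma gluevar_ge_line: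
  assumes "a \<le> 0" "a + b * (1 - \<beta>) \<le> h1" "a + b * (1 - \<alpha>) \<le> h2" "a + b \<le> 1"
    and p: "0 \<le> p" "p \<le> 1"
  shows "a + b * p \<le> gluevar h1 h2 \<beta> \<alpha> p"
proof -
  consider "p < 1 - \<beta>" | "1 - \<beta> \<le> p" "p < 1 - \<alpha>" | "1 - \<alpha> \<le> p" by linarith
  then show ?thesis
  proof cases
    case 1
    obtain t where t: "0 \<le> t" "t \<le> 1" "p = t * (1 - \<beta>)" "gluevar h1 h2 \<beta> \<alpha> p = t * h1"
      using p(1) 1 by (rule gluevar_lower)
    have "a + b * p = (1 - t) * a + t * (a + b * (1 - \<beta>))"
      unfolding t(3) by (simp add: algebra_simps)
    also have "\<dots> \<le> (1 - t) * 0 + t * h1"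
      using t assms by (intro add_mono mult_left_mono) auto
    finally show ?thesis using t(4) by simp
  next
    case 2
    then obtain t where t: "0 \<le> t" "t \<le> 1" "p = (1 - \<beta>) + t * (\<beta> - \<alpha>)"
      "gluevar h1 h2 \<beta> \<alpha> p = (1 - t) * h1 + t * h2"
      by (rule gluevar_middle)
    have "a + b * p = (1 - t) * (a + b * (1 - \<beta>)) + t * (a + b * (1 - \<alpha>))"
      unfolding t(3) by (simp add: algebra_simps)
    also have "\<dots> \<le> (1 - t) * h1 + t * h2"
      using t assms by (intro add_mono mult_left_mono) auto
    finally show ?thesis using t(4) by simp
  next
    case 3
    have "b * p \<le> max (b * (1 - \<alpha>)) (b * 1)"
    proof (cases "0 \<le> b")
      case True
      then have "b * p \<le> b * 1" using p by (intro mult_left_mono) auto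
      then show ?thesis by linarith
    next
      case False
      then have "b * p \<le> b * (1 - \<alpha>)" using 3 by (intro mult_left_mono_neg) auto
      then show ?thesis by linarith
    qed
    then have "a + b * p \<le> max (a + b * (1 - \<alpha>)) (a + b)"
      by simp
    then show ?thesis
      using 3 assms h by (simp add: gluevar_upper)
  qed
qed

lemma gluevar_ge_line_through_origin:
  assumes "b * (1 - \<beta>) \<le> h1" "b * (1 - \<alpha>) \<le> h2" "b \<le> 1" "0 \<le> p" "p \<le> 1"
  shows "b * p \<le> gluevar h1 h2 \<beta> \<alpha> p"
  using gluevar_ge_line[of 0 b p] assms by simp

lemma gluevar_ge_line_through_one:
  assumes "1 \<le> s" "1 - s * \<beta> \<le> h1" "1 - s * \<alpha> \<le> h2" "0 \<le> p" "p \<le> 1"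
  shows "1 - s + s * p \<le> gluevar h1 h2 \<beta> \<alpha> p"
  using gluevar_ge_line[of "1 - s" s p] assms by (simp add: algebra_simps)

lemma gluevar_le_1:
  assumes "0 \<le> p"
  shows "gluevar h1 h2 \<beta> \<alpha> p \<le> 1"
proof -
  consider "p < 1 - \<beta>" | "1 - \<beta> \<le> p" "p < 1 - \<alpha>" | "1 - \<alpha> \<le> p" by linarith
  then show ?thesis
  proof cases
    case 1
    with assms obtain t where "0 \<le> t" "t \<le> 1" "gluevar h1 h2 \<beta> \<alpha> p = t * h1"
      by (rule gluevar_lower)
    then show ?thesis using h mult_left_le_one_le[of h1 t] by simp
  next
    case 2
    then obtain t where "0 \<le> t" "t \<le> 1" "gluevar h1 h2 \<beta> \<alpha> p = (1 - t) * h1 + t * h2"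
      by (rule gluevar_middle)
    moreover have "(1 - t) * h1 + t * h2 \<le> (1 - t) * 1 + t * 1" if "0 \<le> t" "t \<le> 1"
      using that h by (intro add_mono mult_left_mono) auto
    ultimately show ?thesis by simp
  next
    case 3
    then show ?thesis by (simp add: gluevar_upper)
  qed
qed

lemma gluevar_mono: "mono_on {0..1} (gluevar h1 h2 \<beta> \<alpha>)"
proof (rule mono_onI)
  fix x y :: real assume "x \<in> {0..1}" "y \<in> {0..1}" "x \<le> y"
  show "gluevar h1 h2 \<beta> \<alpha> x \<le> gluevar h1 h2 \<beta> \<alpha> y"
  proof (cases "1 - \<alpha> \<le> y")
    case True
    then show ?thesis
      using gluevar_le_1 \<open>x \<in> {0..1}\<close> by (simp add: gluevar_upper)
  next
    case False
    have "h1 * x / (1 - \<beta>) \<le> h1 * y / (1 - \<beta>)"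
      using \<open>x \<le> y\<close> h ab by (intro divide_right_mono mult_left_mono) auto
    moreover have "(h2 - h1) * (x - (1 - \<beta>)) / (\<beta> - \<alpha>) \<le> (h2 - h1) * (y - (1 - \<beta>)) / (\<beta> - \<alpha>)"
      using \<open>x \<le> y\<close> h ab by (intro divide_right_mono mult_left_mono) auto
    moreover have "h1 * x / (1 - \<beta>) \<le> h1" if "x < 1 - \<beta>"
      using that h ab mult_left_mono[of x "1 - \<beta>" h1] by (simp add: field_simps)
    moreover have "0 \<le> (h2 - h1) * (y - (1 - \<beta>)) / (\<beta> - \<alpha>)" if "1 - \<beta> \<le> y"
      using that h ab by simp
    ultimately show ?thesis
      using False \<open>x \<le> y\<close> unfolding gluevar_def by auto
  qed
qed

lemma regular_distortion_gluevar: "regular_distortion (gluevar h1 h2 \<beta> \<alpha>)"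
proof -
  define K where "K = 1 / (1 - \<beta>) + 1 / \<alpha>"
  have bounds: "gluevar h1 h2 \<beta> \<alpha> p \<le> K * p \<and> 1 - gluevar h1 h2 \<beta> \<alpha> p \<le> K * (1 - p)"
    if p: "0 \<le> p" "p \<le> 1" for p
  proof
    have "p / (1 - \<beta>) \<le> K * p"
      unfolding K_def using p ab by (simp add: algebra_simps)
    moreover have "gluevar h1 h2 \<beta> \<alpha> p \<le> p / (1 - \<beta>)"
    proof (cases "p < 1 - \<beta>")
      case True
      with p(1) obtain t where "0 \<le> t" "p = t * (1 - \<beta>)" "gluevar h1 h2 \<beta> \<alpha> p = t * h1"
        by (rule gluevar_lower)
      then show ?thesis using h ab mult_right_le_one_le[of t h1] by simp
    next
      case False
      then have "1 \<le> p / (1 - \<beta>)" using ab by (simp add: field_simps)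
      then show ?thesis using gluevar_le_1[OF p(1)] by linarith
    qed
    ultimately show "gluevar h1 h2 \<beta> \<alpha> p \<le> K * p" by simp
    have "(1 - p) / \<alpha> \<le> K * (1 - p)"
      unfolding K_def using p ab by (simp add: algebra_simps)
    moreover have "1 - gluevar h1 h2 \<beta> \<alpha> p \<le> (1 - p) / \<alpha>"
    proof (cases "p < 1 - \<alpha>")
      case True
      then have "1 \<le> (1 - p) / \<alpha>" using ab by (simp add: field_simps)
      then show ?thesis using gluevar_ge_line[of 0 0 p] p ab h by linarith
    next
      case False
      then show ?thesis using p ab by (simp add: gluevar_upper)
    qed
    ultimately show "1 - gluevar h1 h2 \<beta> \<alpha> p \<le> K * (1 - p)" by simp
  qed
  have "gluevar h1 h2 \<beta> \<alpha> 0 = 0"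
    using ab by (simp add: gluevar_def)
  then show ?thesis
    unfolding regular_distortion_def using gluevar_mono bounds gluevar_upper[of 1] ab
    by (intro conjI exI[of _ K]) auto
qed

lemma gluevar_tendsto_at_left: "(gluevar h1 h2 \<beta> \<alpha> \<longlongrightarrow> h2) (at_left (1 - \<alpha>))"
proof -
  let ?lin = "\<lambda>p. h1 + (h2 - h1) * (p - (1 - \<beta>)) / (\<beta> - \<alpha>)"
  have "\<beta> - \<alpha> \<noteq> 0" using ab by linarith
  then have "(?lin \<longlongrightarrow> ?lin (1 - \<alpha>)) (at_left (1 - \<alpha>))"
    by (intro tendsto_intros)
  moreover have "?lin (1 - \<alpha>) = h2"
    using \<open>\<beta> - \<alpha> \<noteq> 0\<close> by simp
  moreover have "eventually (\<lambda>p. ?lin p = gluevar h1 h2 \<beta> \<alpha> p) (at_left (1 - \<alpha>))"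
  proof -
    have "eventually (\<lambda>p. p \<in> {1 - \<beta><..<1 - \<alpha>}) (at_left (1 - \<alpha>))"
      using ab by (intro eventually_at_left_real) simp
    then show ?thesis
      by eventually_elim (simp add: gluevar_def)
  qed
  ultimately show ?thesis
    using Lim_transform_eventually by fastforce
qed

end

section \<open>The four regimes\<close>

context
  fixes \<alpha> \<beta> h1 h2 k1 k2 k3 :: real
  assumes ab: "0 < \<alpha>" "\<alpha> < \<beta>" "\<beta> < 1" and h: "0 \<le> h1" "h1 \<le> h2" "h2 < 1"
    and k1_def: "k1 = (h2 - h1) / (\<beta> - \<alpha>)" and k2_def: "k2 = h1 / (1 - \<beta>)"
    and k3_def: "k3 = (1 - h2) / \<alpha>"
begin

text \<open>\<open>k\<^sub>2\<close> and \<open>k\<^sub>1\<close> are the slopes of the two linear pieces of \<open>gluevar\<close>, and \<open>k\<^sub>3\<close> that of the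
  chord from \<open>(1 - \<alpha>, h\<^sub>2)\<close> to \<open>(1, 1)\<close>.\<close>

lemma gluevar_slopes: "h1 = k2 * (1 - \<beta>)" "h2 = h1 + k1 * (\<beta> - \<alpha>)" "1 = h2 + k3 * \<alpha>"
  unfolding k1_def k2_def k3_def using ab by simp_all

lemma gluevar_ge_identity:
  assumes "(k1 \<le> k2 \<and> 1 - \<alpha> \<le> h2) \<or> (max k2 k3 < k1 \<and> 1 \<le> k2)" and "0 \<le> p" "p \<le> 1"
  shows "p \<le> gluevar h1 h2 \<beta> \<alpha> p"
proof -
  have "1 - \<beta> \<le> h1 \<and> 1 - \<alpha> \<le> h2"
    using assms(1)
  proof
    assume a: "k1 \<le> k2 \<and> 1 - \<alpha> \<le> h2"
    have "k1 * (\<beta> - \<alpha>) \<le> k2 * (\<beta> - \<alpha>)"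
      using a ab by (intro mult_right_mono) auto
    then have "(1 - \<alpha>) * 1 \<le> (1 - \<alpha>) * k2"
      using a gluevar_slopes by (simp add: algebra_simps)
    then have "1 * (1 - \<beta>) \<le> k2 * (1 - \<beta>)"
      using ab by (intro mult_right_mono) auto
    then show ?thesis
      using a gluevar_slopes by simp
  next
    assume a: "max k2 k3 < k1 \<and> 1 \<le> k2"
    have "1 * (1 - \<beta>) \<le> k2 * (1 - \<beta>)"
      using a ab by (intro mult_right_mono) auto
    moreover have "1 - \<alpha> \<le> h2"
    proof (rule ccontr)
      assume "\<not> 1 - \<alpha> \<le> h2"
      then have "1 * \<alpha> < k3 * \<alpha>"
        using gluevar_slopes(3) by simp
      then have "1 < k3" using ab by simp
      then have "1 * (\<beta> - \<alpha>) < k1 * (\<beta> - \<alpha>)"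
        using a ab by (intro mult_strict_right_mono) auto
      with \<open>1 * (1 - \<beta>) \<le> k2 * (1 - \<beta>)\<close> \<open>1 * \<alpha> < k3 * \<alpha>\<close> show False
        using gluevar_slopes by simp
    qed
    ultimately show ?thesis
      using gluevar_slopes by simp
  qed
  then show ?thesis
    using gluevar_ge_line_through_origin[OF ab h, of 1 p] assms(2,3) by simp
qed

lemma gluevar_minorants_case_ii:
  assumes "k1 \<le> k2" "h2 < 1 - \<alpha>" and p: "0 \<le> p" "p \<le> 1"
  shows "p + (h2 - 1 + \<alpha>) * p / (1 - \<alpha>) \<le> gluevar h1 h2 \<beta> \<alpha> p"
    and "p + (h2 - 1 + \<alpha>) * (1 - p) / (1 - (1 - \<alpha>)) \<le> gluevar h1 h2 \<beta> \<alpha> p"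
proof -
  have "k1 * (1 - \<beta>) \<le> k2 * (1 - \<beta>)" "k1 * ((\<beta> - \<alpha>) * (1 - \<beta>)) \<le> k2 * ((\<beta> - \<alpha>) * (1 - \<beta>))"
    using assms ab by (intro mult_right_mono; simp)+
  moreover have "h2 * (1 - \<beta>) = h1 * (1 - \<beta>) + k1 * ((\<beta> - \<alpha>) * (1 - \<beta>))"
    "h1 * (1 - \<alpha>) = h1 * (1 - \<beta>) + k2 * ((\<beta> - \<alpha>) * (1 - \<beta>))"
    using gluevar_slopes(1,2) by algebra+
  ultimately have "h2 * (1 - \<beta>) \<le> h1 * (1 - \<alpha>)"
    by linarith
  then have "h2 / (1 - \<alpha>) * (1 - \<beta>) \<le> h1"
    using ab by (simp add: field_simps)
  then have "h2 / (1 - \<alpha>) * p \<le> gluevar h1 h2 \<beta> \<alpha> p"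
    using assms ab by (intro gluevar_ge_line_through_origin[OF ab h]) simp_all
  moreover have "p + (h2 - 1 + \<alpha>) * p / (1 - \<alpha>) = h2 / (1 - \<alpha>) * p"
    using ab by (simp add: field_simps)
  ultimately show "p + (h2 - 1 + \<alpha>) * p / (1 - \<alpha>) \<le> gluevar h1 h2 \<beta> \<alpha> p"
    by simp
  have "k1 * (1 - \<alpha>) < 1 * (1 - \<alpha>)" "1 * \<alpha> < k3 * \<alpha>"
    using assms \<open>k1 * (1 - \<beta>) \<le> k2 * (1 - \<beta>)\<close> gluevar_slopes by (simp_all add: algebra_simps)
  then have "k1 < 1" "1 < k3"
    using ab by simp_all
  then have "k1 * (\<beta> - \<alpha>) \<le> k3 * (\<beta> - \<alpha>)"
    using ab by (intro mult_right_mono) auto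
  then have "1 - k3 + k3 * p \<le> gluevar h1 h2 \<beta> \<alpha> p"
    using p \<open>1 < k3\<close> gluevar_slopes
    by (intro gluevar_ge_line_through_one[OF ab h]) (simp_all add: algebra_simps)
  moreover have "p + (h2 - 1 + \<alpha>) * (1 - p) / (1 - (1 - \<alpha>)) = 1 - k3 + k3 * p"
    unfolding k3_def using ab by (simp add: field_simps)
  ultimately show "p + (h2 - 1 + \<alpha>) * (1 - p) / (1 - (1 - \<alpha>)) \<le> gluevar h1 h2 \<beta> \<alpha> p"
    by simp
qed

lemma gluevar_slopes_case_iii:
  assumes "k2 < k1" "k1 < k3"
  shows "k2 < 1" "1 < k3"
proof -
  have "k2 * (\<beta> - \<alpha>) < k1 * (\<beta> - \<alpha>)" "k2 * \<alpha> < k3 * \<alpha>"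
    "k1 * (\<beta> - \<alpha>) < k3 * (\<beta> - \<alpha>)" "k2 * (1 - \<beta>) < k3 * (1 - \<beta>)"
    using assms ab by (intro mult_strict_right_mono; simp)+
  then show "k2 < 1" "1 < k3"
    using gluevar_slopes by (simp_all add: algebra_simps)
qed

lemma gluevar_minorants_case_iii:
  assumes "k2 < k1" "k1 < k3" and p: "0 \<le> p" "p \<le> 1"
  shows "(k2 - 1) * p \<le> gluevar h1 h2 \<beta> \<alpha> p - p"
    and "(k2 - 1) * (1 - \<beta>) + (k1 - 1) * (p - (1 - \<beta>)) \<le> gluevar h1 h2 \<beta> \<alpha> p - p"
    and "(k3 - 1) * (p - 1) \<le> gluevar h1 h2 \<beta> \<alpha> p - p"
proof -
  have "k2 * (\<beta> - \<alpha>) < k1 * (\<beta> - \<alpha>)" "k1 * (\<beta> - \<alpha>) < k3 * (\<beta> - \<alpha>)"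
    "k1 * \<alpha> < k3 * \<alpha>" "k2 * (1 - \<beta>) < k1 * (1 - \<beta>)"
    using assms ab by (intro mult_strict_right_mono; simp)+
  note slopes = this gluevar_slopes gluevar_slopes_case_iii[OF assms(1,2)]
  have "k2 * p \<le> gluevar h1 h2 \<beta> \<alpha> p"
    using p slopes by (intro gluevar_ge_line_through_origin[OF ab h]) (simp_all add: algebra_simps)
  then show "(k2 - 1) * p \<le> gluevar h1 h2 \<beta> \<alpha> p - p"
    by (simp add: algebra_simps)
  have "(h1 - k1 * (1 - \<beta>)) + k1 * p \<le> gluevar h1 h2 \<beta> \<alpha> p"
    using p slopes by (intro gluevar_ge_line[OF ab h]) (simp_all add: algebra_simps)
  moreover have "(k2 - 1) * (1 - \<beta>) + (k1 - 1) * (p - (1 - \<beta>)) = (h1 - k1 * (1 - \<beta>)) + k1 * p - p"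
    using gluevar_slopes(1) by (simp add: algebra_simps)
  ultimately show "(k2 - 1) * (1 - \<beta>) + (k1 - 1) * (p - (1 - \<beta>)) \<le> gluevar h1 h2 \<beta> \<alpha> p - p"
    by linarith
  have "1 - k3 + k3 * p \<le> gluevar h1 h2 \<beta> \<alpha> p"
    using p slopes by (intro gluevar_ge_line_through_one[OF ab h]) (simp_all add: algebra_simps)
  then show "(k3 - 1) * (p - 1) \<le> gluevar h1 h2 \<beta> \<alpha> p - p"
    by (simp add: algebra_simps)
qed

lemma gluevar_minorants_case_iv:
  assumes "(k3 = k1 \<and> k2 < k1) \<or> (max k2 k3 < k1 \<and> k2 < 1)"
  shows "h1 < 1 - \<beta>"
    and "0 \<le> p \<Longrightarrow> p \<le> 1 \<Longrightarrow> p + (h1 - 1 + \<beta>) * p / (1 - \<beta>) \<le> gluevar h1 h2 \<beta> \<alpha> p"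
    and "0 \<le> p \<Longrightarrow> p \<le> 1 \<Longrightarrow> p + (h1 - 1 + \<beta>) * (1 - p) / (1 - (1 - \<beta>)) \<le> gluevar h1 h2 \<beta> \<alpha> p"
proof -
  have "k2 < k1" "k3 \<le> k1"
    using assms by auto
  then have "k2 * (\<beta> - \<alpha>) < k1 * (\<beta> - \<alpha>)" "k3 * (\<beta> - \<alpha>) \<le> k1 * (\<beta> - \<alpha>)" "k2 * \<beta> < k1 * \<beta>"
    using ab by (auto intro: mult_strict_right_mono mult_right_mono)
  have "k2 < 1"
    using assms
  proof
    assume "k3 = k1 \<and> k2 < k1"
    then have "k2 * (1 - \<beta>) + k2 * \<beta> < 1"
      using gluevar_slopes \<open>k2 * \<beta> < k1 * \<beta>\<close> by (simp add: algebra_simps)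
    then show ?thesis by (simp add: algebra_simps)
  qed simp
  then have "k2 * (1 - \<beta>) < 1 * (1 - \<beta>)"
    using ab by (intro mult_strict_right_mono) auto
  then show "h1 < 1 - \<beta>"
    using gluevar_slopes(1) by simp
  assume p: "0 \<le> p" "p \<le> 1"
  have "k2 * p \<le> gluevar h1 h2 \<beta> \<alpha> p"
    using p \<open>k2 < 1\<close> \<open>k2 * (\<beta> - \<alpha>) < k1 * (\<beta> - \<alpha>)\<close> gluevar_slopes
    by (intro gluevar_ge_line_through_origin[OF ab h]) (simp_all add: algebra_simps)
  moreover have "p + (h1 - 1 + \<beta>) * p / (1 - \<beta>) = k2 * p"
    unfolding k2_def using ab by (simp add: field_simps)
  ultimately show "p + (h1 - 1 + \<beta>) * p / (1 - \<beta>) \<le> gluevar h1 h2 \<beta> \<alpha> p"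
    by simp
  define s where "s = (1 - h1) / \<beta>"
  have "s * \<beta> = 1 - h1"
    unfolding s_def using ab by simp
  have "k3 * \<beta> \<le> s * \<beta>"
    using \<open>s * \<beta> = 1 - h1\<close> gluevar_slopes \<open>k3 * (\<beta> - \<alpha>) \<le> k1 * (\<beta> - \<alpha>)\<close>
    by (simp add: algebra_simps)
  then have "k3 * \<alpha> \<le> s * \<alpha>"
    using ab by (intro mult_right_mono) auto
  moreover have "1 \<le> s"
    unfolding s_def using \<open>h1 < 1 - \<beta>\<close> ab by (simp add: field_simps)
  ultimately have "1 - s + s * p \<le> gluevar h1 h2 \<beta> \<alpha> p"
    using p \<open>s * \<beta> = 1 - h1\<close> gluevar_slopes(3)
    by (intro gluevar_ge_line_through_one[OF ab h]) (simp_all add: algebra_simps)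
  moreover have "p + (h1 - 1 + \<beta>) * (1 - p) / (1 - (1 - \<beta>)) = 1 - s + s * p"
    unfolding s_def using ab by (simp add: field_simps)
  ultimately show "p + (h1 - 1 + \<beta>) * (1 - p) / (1 - (1 - \<beta>)) \<le> gluevar h1 h2 \<beta> \<alpha> p"
    by simp
qed

context
  fixes M :: "'a measure" and \<mu> \<sigma> :: real
  assumes "prob_space M" and "atomless M" and "\<sigma> > 0"
begin

interpretation prob_space M by fact

lemma INF_gluevar_case_i:
  assumes "(k1 \<le> k2 \<and> 1 - \<alpha> \<le> h2) \<or> (max k2 k3 < k1 \<and> 1 \<le> k2)"
  shows "(INF X\<in>Vset M \<mu> \<sigma>. ereal (distortion_rm M (gluevar h1 h2 \<beta> \<alpha>) X)) = ereal \<mu>"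
proof (rule antisym)
  show "ereal \<mu> \<le> (INF X\<in>Vset M \<mu> \<sigma>. ereal (distortion_rm M (gluevar h1 h2 \<beta> \<alpha>) X))"
    using distortion_rm_ge_expectation[OF regular_distortion_gluevar[OF ab h] Vset_D(1,2)] Vset_D(4)
      gluevar_ge_identity[OF assms]
    by (intro INF_greatest) simp
  show "(INF X\<in>Vset M \<mu> \<sigma>. ereal (distortion_rm M (gluevar h1 h2 \<beta> \<alpha>) X)) \<le> ereal \<mu>"
  proof (rule INF_le_limit)
    have "eventually (\<lambda>q. q \<in> {1 - \<alpha><..<1}) (at_left 1)"
      using ab by (intro eventually_at_left_real) simp
    then show "eventually (\<lambda>q. \<exists>X\<in>Vset M \<mu> \<sigma>. distortion_rm M (gluevar h1 h2 \<beta> \<alpha>) X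
        = \<mu> + \<sigma> * (sqrt (1 - q) / sqrt q)) (at_left 1)"
    proof eventually_elim
      case (elim q)
      then have q: "0 < q" "q < 1" "1 - \<alpha> \<le> q" using ab by auto
      have "(1 - q) / sqrt (q * (1 - q)) = (1 - q) / sqrt (1 - q) / sqrt q"
        by (simp add: real_sqrt_mult mult.commute)
      also have "\<dots> = sqrt (1 - q) / sqrt q"
        using q by (simp add: real_div_sqrt)
      finally have "\<sigma> * (1 - q) / sqrt (q * (1 - q)) = \<sigma> * sqrt (1 - q) / sqrt q"
        by (metis times_divide_eq_right)
      then show ?case
        using two_point_attains[OF \<open>atomless M\<close> regular_distortion_gluevar[OF ab h] \<open>\<sigma> > 0\<close> q(1,2)]
        by (simp add: gluevar_upper[OF ab h q(3)])
    qed
    have "((\<lambda>q. \<mu> + \<sigma> * (sqrt (1 - q) / sqrt q)) \<longlongrightarrow> \<mu> + \<sigma> * (sqrt (1 - 1) / sqrt 1)) (at_left 1)"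
      by (intro tendsto_intros) simp_all
    then show "((\<lambda>q. \<mu> + \<sigma> * (sqrt (1 - q) / sqrt q)) \<longlongrightarrow> \<mu>) (at_left 1)"
      by simp
  qed simp
qed

lemma INF_gluevar_case_ii:
  assumes "k1 \<le> k2" "h2 < 1 - \<alpha>"
  shows "(INF X\<in>Vset M \<mu> \<sigma>. ereal (distortion_rm M (gluevar h1 h2 \<beta> \<alpha>) X))
    = ereal (\<mu> + \<sigma> * (h2 - 1 + \<alpha>) / sqrt (\<alpha> * (1 - \<alpha>)))"
proof (rule antisym)
  note g = regular_distortion_gluevar[OF ab h]
  have "\<mu> + \<sigma> * (h2 - 1 + \<alpha>) / sqrt ((1 - \<alpha>) * (1 - (1 - \<alpha>))) \<le> distortion_rm M (gluevar h1 h2 \<beta> \<alpha>) X"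
    if "X \<in> Vset M \<mu> \<sigma>" for X
    using ab assms gluevar_minorants_case_ii[OF assms]
    by (intro distortion_rm_ge_two_slope[OF g that \<open>\<sigma> > 0\<close>]) simp_all
  then show "ereal (\<mu> + \<sigma> * (h2 - 1 + \<alpha>) / sqrt (\<alpha> * (1 - \<alpha>)))
      \<le> (INF X\<in>Vset M \<mu> \<sigma>. ereal (distortion_rm M (gluevar h1 h2 \<beta> \<alpha>) X))"
    by (intro INF_greatest) (simp add: mult.commute)
  have var: "three_point_variance 0 (1 - \<alpha>) \<alpha> 1 1 0 = \<alpha> * (1 - \<alpha>)"
    unfolding three_point_variance_def by (simp add: power2_eq_square algebra_simps)
  have "(INF X\<in>Vset M \<mu> \<sigma>. ereal (distortion_rm M (gluevar h1 h2 \<beta> \<alpha>) X))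
      \<le> ereal (\<mu> + \<sigma> * ((h2 - (0 + (1 - \<alpha>))) * (1 - 0) + (gluevar h1 h2 \<beta> \<alpha> 0 - 0) * (1 - 1))
        / sqrt (three_point_variance 0 (1 - \<alpha>) \<alpha> 1 1 0))"
    using ab var gluevar_tendsto_at_left[OF ab h]
    by (intro INF_distortion_rm_le_three_point_limit[OF \<open>atomless M\<close> g \<open>\<sigma> > 0\<close>]) simp_all
  then show "(INF X\<in>Vset M \<mu> \<sigma>. ereal (distortion_rm M (gluevar h1 h2 \<beta> \<alpha>) X))
      \<le> ereal (\<mu> + \<sigma> * (h2 - 1 + \<alpha>) / sqrt (\<alpha> * (1 - \<alpha>)))"
    unfolding var by (simp add: algebra_simps)
qed

lemma INF_gluevar_case_iii:
  assumes "k2 < k1" "k1 < k3"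
  shows "(INF X\<in>Vset M \<mu> \<sigma>. ereal (distortion_rm M (gluevar h1 h2 \<beta> \<alpha>) X))
    = ereal (\<mu> - \<sigma> * sqrt ((1 - h2 - \<alpha>)\<^sup>2 / \<alpha> + (h2 - h1 - \<beta> + \<alpha>)\<^sup>2 / (\<beta> - \<alpha>)
        + (h1 - 1 + \<beta>)\<^sup>2 / (1 - \<beta>)))"
proof -
  note g = regular_distortion_gluevar[OF ab h]
  define \<xi> where "\<xi> = (1 - \<beta>) * (k2 - 1)\<^sup>2 + (\<beta> - \<alpha>) * (k1 - 1)\<^sup>2 + \<alpha> * (k3 - 1)\<^sup>2"
  have "1 - h2 - \<alpha> = \<alpha> * (k3 - 1)" "h2 - h1 - \<beta> + \<alpha> = (\<beta> - \<alpha>) * (k1 - 1)"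
    "h1 - 1 + \<beta> = (1 - \<beta>) * (k2 - 1)"
    using gluevar_slopes by (simp_all add: algebra_simps)
  then have \<xi>_eq: "(1 - h2 - \<alpha>)\<^sup>2 / \<alpha> + (h2 - h1 - \<beta> + \<alpha>)\<^sup>2 / (\<beta> - \<alpha>) + (h1 - 1 + \<beta>)\<^sup>2 / (1 - \<beta>) = \<xi>"
    unfolding \<xi>_def using ab by (simp add: power2_eq_square)
  have mean: "(1 - \<beta>) * (k2 - 1) + (\<beta> - \<alpha>) * (k1 - 1) + \<alpha> * (k3 - 1) = 0"
    using gluevar_slopes by (simp add: algebra_simps)
  have "0 < \<xi>"
    unfolding \<xi>_def using ab gluevar_slopes_case_iii[OF assms] by (intro add_pos_nonneg) auto
  have "\<mu> - \<sigma> * sqrt \<xi> \<le> distortion_rm M (gluevar h1 h2 \<beta> \<alpha>) X" if "X \<in> Vset M \<mu> \<sigma>" for X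
    unfolding \<xi>_def using assms mean \<open>0 < \<xi>\<close> gluevar_minorants_case_iii[OF assms]
    by (intro distortion_rm_ge_three_slope[OF g that \<open>\<sigma> > 0\<close>]) (simp_all add: \<xi>_def)
  then have lower: "ereal (\<mu> - \<sigma> * sqrt \<xi>)
      \<le> (INF X\<in>Vset M \<mu> \<sigma>. ereal (distortion_rm M (gluevar h1 h2 \<beta> \<alpha>) X))"
    by (intro INF_greatest) simp
  have var: "three_point_variance (1 - \<beta>) (\<beta> - \<alpha>) \<alpha> (1 - k2) (1 - k1) (1 - k3) = \<xi>"
    using mean unfolding three_point_variance_def \<xi>_def by algebra
  have numerator: "(h2 - ((1 - \<beta>) + (\<beta> - \<alpha>))) * ((1 - k1) - (1 - k3))
      + (gluevar h1 h2 \<beta> \<alpha> (1 - \<beta>) - (1 - \<beta>)) * ((1 - k2) - (1 - k1)) = - \<xi>"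
    using gluevar_slopes mean unfolding gluevar_at_1_minus_\<beta>[OF ab h] \<xi>_def by algebra
  have "(INF X\<in>Vset M \<mu> \<sigma>. ereal (distortion_rm M (gluevar h1 h2 \<beta> \<alpha>) X))
    \<le> ereal (\<mu> + \<sigma> * ((h2 - ((1 - \<beta>) + (\<beta> - \<alpha>))) * ((1 - k1) - (1 - k3))
      + (gluevar h1 h2 \<beta> \<alpha> (1 - \<beta>) - (1 - \<beta>)) * ((1 - k2) - (1 - k1)))
      / sqrt (three_point_variance (1 - \<beta>) (\<beta> - \<alpha>) \<alpha> (1 - k2) (1 - k1) (1 - k3)))"
    using ab assms var \<open>0 < \<xi>\<close> gluevar_tendsto_at_left[OF ab h]
    by (intro INF_distortion_rm_le_three_point_limit[OF \<open>atomless M\<close> g \<open>\<sigma> > 0\<close>]) simp_all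
  also have "\<dots> = ereal (\<mu> - \<sigma> * sqrt \<xi>)"
    unfolding numerator var using real_div_sqrt[of \<xi>] \<open>0 < \<xi>\<close> by (simp add: times_divide_eq_right[symmetric])
  finally show ?thesis
    unfolding \<xi>_eq using lower by (rule antisym)
qed

lemma INF_gluevar_case_iv:
  assumes "(k3 = k1 \<and> k2 < k1) \<or> (max k2 k3 < k1 \<and> k2 < 1)"
  shows "(INF X\<in>Vset M \<mu> \<sigma>. ereal (distortion_rm M (gluevar h1 h2 \<beta> \<alpha>) X))
    = ereal (\<mu> + \<sigma> * (h1 - 1 + \<beta>) / sqrt (\<beta> * (1 - \<beta>)))"
proof (rule antisym)
  note g = regular_distortion_gluevar[OF ab h]
  have "\<mu> + \<sigma> * (h1 - 1 + \<beta>) / sqrt ((1 - \<beta>) * (1 - (1 - \<beta>))) \<le> distortion_rm M (gluevar h1 h2 \<beta> \<alpha>) X"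
    if "X \<in> Vset M \<mu> \<sigma>" for X
    using ab gluevar_minorants_case_iv[OF assms]
    by (intro distortion_rm_ge_two_slope[OF g that \<open>\<sigma> > 0\<close>]) simp_all
  then show "ereal (\<mu> + \<sigma> * (h1 - 1 + \<beta>) / sqrt (\<beta> * (1 - \<beta>)))
      \<le> (INF X\<in>Vset M \<mu> \<sigma>. ereal (distortion_rm M (gluevar h1 h2 \<beta> \<alpha>) X))"
    by (intro INF_greatest) (simp add: mult.commute)
  have eqs: "(1 - \<beta>) * (1 - (1 - \<beta>)) = \<beta> * (1 - \<beta>)"
    "gluevar h1 h2 \<beta> \<alpha> (1 - \<beta>) - (1 - \<beta>) = h1 - 1 + \<beta>"
    by (simp_all add: gluevar_at_1_minus_\<beta>[OF ab h])
  have "\<exists>X\<in>Vset M \<mu> \<sigma>. distortion_rm M (gluevar h1 h2 \<beta> \<alpha>) X = \<mu> + \<sigma> * (h1 - 1 + \<beta>) / sqrt (\<beta> * (1 - \<beta>))"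
    using ab by (intro two_point_attains[OF \<open>atomless M\<close> g \<open>\<sigma> > 0\<close>, of "1 - \<beta>", unfolded eqs]) simp_all
  then show "(INF X\<in>Vset M \<mu> \<sigma>. ereal (distortion_rm M (gluevar h1 h2 \<beta> \<alpha>) X))
      \<le> ereal (\<mu> + \<sigma> * (h1 - 1 + \<beta>) / sqrt (\<beta> * (1 - \<beta>)))"
    by (auto intro: INF_lower2)
qed

end

end

theorem proposition4p1:
  fixes M :: "'a measure" and \<mu> \<sigma> \<alpha> \<beta> h1 h2 k1 k2 k3 \<xi> :: real
  assumes "prob_space M" and "atomless M"
    and "\<sigma> > 0" and "0 < \<alpha>" and "\<alpha> < \<beta>" and "\<beta> < 1"
    and "0 \<le> h1" and "h1 \<le> h2" and "h2 < 1"
    and "k1 = (h2 - h1) / (\<beta> - \<alpha>)" and "k2 = h1 / (1 - \<beta>)" and "k3 = (1 - h2) / \<alpha>"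
    and "\<xi> = (1 - h2 - \<alpha>)\<^sup>2 / \<alpha> + (h2 - h1 - \<beta> + \<alpha>)\<^sup>2 / (\<beta> - \<alpha>)
             + (h1 - 1 + \<beta>)\<^sup>2 / (1 - \<beta>)"
  shows "((k2 \<ge> k1 \<and> h2 \<ge> 1 - \<alpha>) \<or> (max k2 k3 < k1 \<and> k2 \<ge> 1) \<longrightarrow>
           (INF X\<in>Vset M \<mu> \<sigma>. ereal (distortion_rm M (gluevar h1 h2 \<beta> \<alpha>) X)) = ereal \<mu>)
       \<and> (k2 \<ge> k1 \<and> h2 < 1 - \<alpha> \<longrightarrow>
           (INF X\<in>Vset M \<mu> \<sigma>. ereal (distortion_rm M (gluevar h1 h2 \<beta> \<alpha>) X))
             = ereal (\<mu> + \<sigma> * (h2 - 1 + \<alpha>) / sqrt (\<alpha> * (1 - \<alpha>))))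
       \<and> (k3 > k1 \<and> k1 > k2 \<longrightarrow>
           (INF X\<in>Vset M \<mu> \<sigma>. ereal (distortion_rm M (gluevar h1 h2 \<beta> \<alpha>) X))
             = ereal (\<mu> - \<sigma> * sqrt \<xi>))
       \<and> ((k3 = k1 \<and> k1 > k2) \<or> (max k2 k3 < k1 \<and> k2 < 1) \<longrightarrow>
           (INF X\<in>Vset M \<mu> \<sigma>. ereal (distortion_rm M (gluevar h1 h2 \<beta> \<alpha>) X))
             = ereal (\<mu> + \<sigma> * (h1 - 1 + \<beta>) / sqrt (\<beta> * (1 - \<beta>))))"
proof -
  note hyps = assms(4-12) assms(1-3)
  show ?thesis
    using INF_gluevar_case_i[OF hyps] INF_gluevar_case_ii[OF hyps] INF_gluevar_case_iii[OF hyps]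
      INF_gluevar_case_iv[OF hyps]
    unfolding assms(13) by blast
qed

end
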